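(* Let $T,p,q,K\ge1$, let $\mathbf X\in\mathbb R^{T\times p}$ and $\mathbf R\in\mathbb R^{T\times q}$ (entries $r_{t\ell}\ge 0$) be deterministic matrices, let $G_1,\dots,G_K$ be a partition of $\{1,\dots,p\}$, and let $\boldsymbol\phi^*\in\mathbb R^p$, $\boldsymbol\alpha^*\in\mathbb R^q$ with $\mathbf R_{t,:}\boldsymbol\alpha^*>0$ for all $t$. Assume the observations $\mathbf Y\in\mathbb R^T$ satisfy $\mathrm{diag}(\mathbf Y)\mathbf R\boldsymbol\alpha^*=\mathbf X\boldsymbol\phi^*+\boldsymbol\xi$ with $\boldsymbol\xi\sim\mathcal N(0,\mathbf I_T)$. Let $\varepsilon\in(0,1)$ and set $$\lambda_k=2\big(r_k+2\sqrt{r_k\log(K/\varepsilon)}+2\log(K/\varepsilon)\big)^{1/2},\quad k=1,\dots,K.$$ Assume that Assumption GRE$(K^*,\kappa)$ holds with $K^*=\mathrm{Card}(\mathcal K^* )$ and some $\kappa>0$. If $T\ge 8C_4^2\log(2q/\varepsilon)$, then, with probability at least $1-2\varepsilon$, the ScHeDs $(\widehat{\boldsymbol\phi},\widehat{\boldsymbol\alpha})$ computed with these $\lambda_k$ satisfies $$\big|\mathbf X(\widehat{\boldsymbol\phi}-\boldsymbol\phi^* )\big|_2\le C_4\sqrt{(8/T)\log(2q/\varepsilon)}\,\big(2|\mathbf X\boldsymbol\phi^*|_2+|\boldsymbol\xi|_2\big)+\frac{8}{\kappa}\sqrt{2s^*+3K^*\log(K/\varepsilon)}+\big|\mathrm{diag}(\mathbf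 Y)\mathbf R(\widehat{\boldsymbol\alpha}-\boldsymbol\alpha^* )\big|_2.$$
   Context: Notation: $\mathrm{diag}(\mathbf v)$ is the diagonal matrix with diagonal $\mathbf v$; $\mathbf A_{t,:}$, $\mathbf A_{:,j}$ are rows/columns; $\mathbf X_{:,G_k}$ and $\boldsymbol\phi_{G_k}$ are the column-submatrix and subvector indexed by $G_k$; $r_k=\mathrm{rank}(\mathbf X_{:,G_k})$; $\boldsymbol\Pi_{G_k}=\mathbf X_{:,G_k}(\mathbf X_{:,G_k}^\top\mathbf X_{:,G_k})^+\mathbf X_{:,G_k}^\top$ (orthogonal projector onto the range of $\mathbf X_{:,G_k}$). ScHeDs: given $\boldsymbol\lambda\in\mathbb R_+^K$, $(\widehat{\boldsymbol\phi},\widehat{\boldsymbol\alpha})$ where $(\widehat{\boldsymbol\phi},\widehat{\boldsymbol\alpha},\widehat{\mathbf v})$ minimizes $\sum_{k}\lambda_k|\mathbf X_{:,G_k}\boldsymbol\phi_{G_k}|_2$ over $(\boldsymbol\phi,\boldsymbol\alpha,\mathbf v)\in\mathbb R^p\times\mathbb R^q\times\mathbb R_+^T$ subject to $|\boldsymbol\Pi_{G_k}(\mathrm{diag}(\mathbf Y)\mathbf R\boldsymbol\alpha-\mathbf X\boldsymbol\phi)|_2\le\lambda_k$ for all $k$; $\mathbf R^\top\mathbf v\le\mathbf R^\top\mathrm{diag}(\mathbf Y)(\mathrm{diag}(\mathbf Y)\mathbf R\boldsymbol\alpha-\mathbf X\boldsymbol\phi)$ coordinatewise; and $1/v_t\le\mathbf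 R_{t,:}\boldsymbol\alpha$ for all $t$. Sparsity: $\mathcal K^*=\{k:|\boldsymbol\phi^*_{G_k}|_1\ne0\}$, $s^*=\sum_{k\in\mathcal K^*}r_k$. Assumption GRE$(N,\kappa)$: for every $\mathcal K\subset\{1,\dots,K\}$ with $\mathrm{Card}(\mathcal K)\le N$ and every $\boldsymbol\delta\in\mathbb R^p$ with $\sum_{k\notin\mathcal K}\lambda_k|\mathbf X_{:,G_k}\boldsymbol\delta_{G_k}|_2\le\sum_{k\in\mathcal K}\lambda_k|\mathbf X_{:,G_k}\boldsymbol\delta_{G_k}|_2$, one has $|\mathbf X\boldsymbol\delta|_2^2\ge\kappa^2\sum_{k\in\mathcal K}|\mathbf X_{:,G_k}\boldsymbol\delta_{G_k}|_2^2$. Constants: $C_1=\max_{\ell\le q}\frac1T\sum_t\frac{r_{t\ell}^2(\mathbf X_{t,:}\boldsymbol\phi^* )^2}{(\mathbf R_{t,:}\boldsymbol\alpha^* )^2}$, $C_2=\max_{\ell\le q}\frac1T\sum_t\frac{r_{t\ell}^2}{(\mathbf R_{t,:}\boldsymbol\alpha^* )^2}$, $C_3=\min_{\ell\le q}\frac1T\sum_t\frac{r_{t\ell}}{\mathbf R_{t,:}\boldsymbol\alpha^*}$, $C_4=(\sqrt{C_2}+\sqrt{2C_1})/C_3$. *)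

theory Defs
  imports "HOL-Analysis.Analysis" "HOL-Probability.Probability"
begin

text \<open>Dimensions are finite index types: 'T (observations, T = CARD('T)),
 'p (columns of X), 'q (columns of R), 'k (groups, K = CARD('k)).
 Euclidean norm of a vector is norm.\<close>

definition restr :: "'p set \<Rightarrow> real^'p \<Rightarrow> real^'p" where
  "restr G \<phi> = (\<chi> j. if j \<in> G then \<phi> $ j else 0)"

definition Xg :: "real^'p^'T \<Rightarrow> 'p set \<Rightarrow> real^'p \<Rightarrow> real^'T" where
  "Xg X G \<phi> = X *v restr G \<phi>"

definition colspace :: "real^'p^'T \<Rightarrow> 'p set \<Rightarrow> (real^'T) set" where
  "colspace X G = range (Xg X G)"

definition grank :: "real^'p^'T \<Rightarrow> 'p set \<Rightarrow> nat" where
  "grank X G = dim (colspace X G)"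

definition Proj :: "real^'p^'T \<Rightarrow> 'p set \<Rightarrow> real^'T \<Rightarrow> real^'T" where
  "Proj X G w = closest_point (colspace X G) w"

definition dmul :: "real^'T \<Rightarrow> real^'T \<Rightarrow> real^'T" where
  "dmul y w = (\<chi> t. y $ t * w $ t)"

definition schd_obj :: "real^'p^'T \<Rightarrow> ('k \<Rightarrow> 'p set) \<Rightarrow> ('k::finite \<Rightarrow> real) \<Rightarrow> real^'p \<Rightarrow> real" where
  "schd_obj X G lam \<phi> = (\<Sum>k\<in>UNIV. lam k * norm (Xg X (G k) \<phi>))"

definition schd_feasible ::
  "real^'p^'T \<Rightarrow> real^'q^'T \<Rightarrow> ('k \<Rightarrow> 'p set) \<Rightarrow> ('k::finite \<Rightarrow> real) \<Rightarrow> real^'T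
   \<Rightarrow> real^'p \<Rightarrow> real^'q \<Rightarrow> real^'T \<Rightarrow> bool" where
  "schd_feasible X R G lam Y \<phi> \<alpha> v \<longleftrightarrow>
     (\<forall>t. v $ t \<ge> 0) \<and>
     (\<forall>k. norm (Proj X (G k) (dmul Y (R *v \<alpha>) - X *v \<phi>)) \<le> lam k) \<and>
     (\<forall>l. (transpose R *v v) $ l \<le> (transpose R *v dmul Y (dmul Y (R *v \<alpha>) - X *v \<phi>)) $ l) \<and>
     (\<forall>t. v $ t > 0 \<and> 1 / v $ t \<le> (R *v \<alpha>) $ t)"

definition schd_min ::
  "real^'p^'T \<Rightarrow> real^'q^'T \<Rightarrow> ('k \<Rightarrow> 'p set) \<Rightarrow> ('k::finite \<Rightarrow> real) \<Rightarrow> real^'T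
   \<Rightarrow> real^'p \<Rightarrow> real^'q \<Rightarrow> real^'T \<Rightarrow> bool" where
  "schd_min X R G lam Y \<phi> \<alpha> v \<longleftrightarrow>
     schd_feasible X R G lam Y \<phi> \<alpha> v \<and>
     (\<forall>\<phi>' \<alpha>' v'. schd_feasible X R G lam Y \<phi>' \<alpha>' v' \<longrightarrow>
        schd_obj X G lam \<phi> \<le> schd_obj X G lam \<phi>')"

definition Kstar :: "('k \<Rightarrow> 'p set) \<Rightarrow> real^'p \<Rightarrow> 'k set" where
  "Kstar G \<phi> = {k. (\<Sum>j\<in>G k. \<bar>\<phi> $ j\<bar>) \<noteq> 0}"

definition sstar :: "real^'p^'T \<Rightarrow> ('k \<Rightarrow> 'p set) \<Rightarrow> real^'p \<Rightarrow> nat" where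
  "sstar X G \<phi> = (\<Sum>k\<in>Kstar G \<phi>. grank X (G k))"

definition GRE :: "real^'p^'T \<Rightarrow> ('k \<Rightarrow> 'p set) \<Rightarrow> ('k::finite \<Rightarrow> real) \<Rightarrow> nat \<Rightarrow> real \<Rightarrow> bool" where
  "GRE X G lam N \<kappa> \<longleftrightarrow>
     (\<forall>Ks \<delta>. card Ks \<le> N \<longrightarrow>
        (\<Sum>k\<in>-Ks. lam k * norm (Xg X (G k) \<delta>)) \<le> (\<Sum>k\<in>Ks. lam k * norm (Xg X (G k) \<delta>)) \<longrightarrow>
        norm (X *v \<delta>) ^ 2 \<ge> \<kappa>^2 * (\<Sum>k\<in>Ks. norm (Xg X (G k) \<delta>) ^ 2))"

definition C1 :: "real^'p^'T \<Rightarrow> real^'q^('T::finite) \<Rightarrow> real^'p \<Rightarrow> real^('q::finite) \<Rightarrow> real" where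
  "C1 X R \<phi> \<alpha> = Max (range (\<lambda>l. (1 / real CARD('T)) *
      (\<Sum>t\<in>UNIV. (R $ t $ l)^2 * ((X *v \<phi>) $ t)^2 / ((R *v \<alpha>) $ t)^2)))"

definition C2 :: "real^'q^('T::finite) \<Rightarrow> real^('q::finite) \<Rightarrow> real" where
  "C2 R \<alpha> = Max (range (\<lambda>l. (1 / real CARD('T)) *
      (\<Sum>t\<in>UNIV. (R $ t $ l)^2 / ((R *v \<alpha>) $ t)^2)))"

definition C3 :: "real^'q^('T::finite) \<Rightarrow> real^('q::finite) \<Rightarrow> real" where
  "C3 R \<alpha> = Min (range (\<lambda>l. (1 / real CARD('T)) *
      (\<Sum>t\<in>UNIV. R $ t $ l / (R *v \<alpha>) $ t)))"

definition C4 :: "real^'p^'T \<Rightarrow> real^'q^('T::finite) \<Rightarrow> real^'p \<Rightarrow> real^('q::finite) \<Rightarrow> real" where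
  "C4 X R \<phi> \<alpha> = (sqrt (C2 R \<alpha>) + sqrt (2 * C1 X R \<phi> \<alpha>)) / C3 R \<alpha>"

end

theory Submission
  imports Defs
begin

text \<open>
  Inflating the true parameters by the factor 1 + D, with D = C4 sqrt((8/T) log(2q/\<epsilon>)),
  gives a feasible point of the ScHeDs program outside an event of probability at most 2\<epsilon>.
  The group constraints hold as long as each projected noise |\<Pi>_k \<xi>|^2 stays below the
  Laurent-Massart level r_k + 2 sqrt(r_k L) + 2 L, L = log(K/\<epsilon>), which a Chernoff bound for
  the chi-square distribution violates with probability at most \<epsilon>/K. The dual constraints hold
  as long as the weighted sums \<Sum>_t w_t (\<xi>_t^2 - 1 + m_t \<xi>_t) stay above a margin of order T C3 D,
  which fails with probability at most \<epsilon>/(2q) by a lower-tail Chernoff bound; the condition on T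
  is exactly what makes this margin large enough. Comparing the minimiser with the inflated truth
  gives, as for the group Lasso, a cone condition, which the group restricted eigenvalue
  assumption turns into the bound 4 sqrt(\<Sum>_{k \<in> K*} \<lambda>_k^2)/\<kappa>; undoing the inflation costs
  D (2 |X \<phi>*| + |\<xi>|).
\<close>

lemma ln_one_plus_ge:
  fixes z :: real
  assumes "0 \<le> z"
  shows "z - z\<^sup>2 / 2 \<le> ln (1 + z)"
proof -
  let ?f = "\<lambda>y::real. ln (1 + y) - y + y\<^sup>2 / 2"
  have "?f 0 \<le> ?f z"
  proof (rule DERIV_nonneg_imp_increasing_open[OF assms])
    fix x :: real assume x: "0 < x" "x < z"
    have "DERIV ?f x :> x\<^sup>2 / (1 + x)"
      using x by (auto intro!: derivative_eq_intros simp: field_simps power2_eq_square)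
    then show "\<exists>y. DERIV ?f x :> y \<and> 0 \<le> y" using x by auto
  qed (intro continuous_intros, auto)
  then show ?thesis by simp
qed

lemma ln_one_minus_ge:
  fixes u :: real
  assumes "0 \<le> u" "u < 1"
  shows "- u - u\<^sup>2 / (2 * (1 - u)) \<le> ln (1 - u)"
proof -
  let ?f = "\<lambda>y::real. ln (1 - y) + y + y\<^sup>2 / (2 * (1 - y))"
  have "?f 0 \<le> ?f u"
  proof (rule DERIV_nonneg_imp_increasing_open[OF assms(1)])
    fix x :: real assume x: "0 < x" "x < u"
    have "DERIV ?f x :> -1 / (1 - x) + 1 + (2 * x * (2 * (1 - x)) + x\<^sup>2 * 2) / (2 * (1 - x))\<^sup>2"
      using x assms by (auto intro!: derivative_eq_intros simp: power2_eq_square)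
    also have "-1 / (1 - x) + 1 + (2 * x * (2 * (1 - x)) + x\<^sup>2 * 2) / (2 * (1 - x))\<^sup>2
        = x\<^sup>2 / (2 * (1 - x)\<^sup>2)"
      using x assms by (simp add: divide_simps) (simp add: algebra_simps power2_eq_square)
    finally show "\<exists>y. DERIV ?f x :> y \<and> 0 \<le> y" by auto
  qed (use assms in \<open>intro continuous_intros, auto\<close>)
  then show ?thesis by simp
qed

lemma gaussian_lower_mgf_factor_le:
  fixes s w b :: real
  assumes "s \<ge> 0" "w \<ge> 0"
  shows "exp (s * w) * (exp (b\<^sup>2 / (2 * (1 + 2 * s * w))) / sqrt (1 + 2 * s * w))
       \<le> exp (s\<^sup>2 * w\<^sup>2 + b\<^sup>2 / 2)"
proof -
  define z where "z = 2 * s * w"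
  have z: "z \<ge> 0" using assms by (simp add: z_def)
  have "s * w - s\<^sup>2 * w\<^sup>2 \<le> ln (1 + z) / 2"
    using ln_one_plus_ge[OF z] by (simp add: z_def power2_eq_square field_simps)
  also have "\<dots> = ln (sqrt (1 + z))" using z by (simp add: ln_sqrt)
  finally have "exp (s * w) \<le> exp (s\<^sup>2 * w\<^sup>2) * sqrt (1 + z)"
    using z by (subst (asm) ln_ge_iff) (auto simp: exp_diff field_simps)
  moreover have "b\<^sup>2 / (2 * (1 + z)) \<le> b\<^sup>2 / 2"
    using z by (intro divide_left_mono) auto
  ultimately have "exp (s * w) * (exp (b\<^sup>2 / (2 * (1 + z))) / sqrt (1 + z))
      \<le> exp (s\<^sup>2 * w\<^sup>2) * sqrt (1 + z) * (exp (b\<^sup>2 / 2) / sqrt (1 + z))"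
    using z by (intro mult_mono divide_right_mono) auto
  also have "\<dots> = exp (s\<^sup>2 * w\<^sup>2 + b\<^sup>2 / 2)" using z by (simp add: exp_add)
  finally show ?thesis by (simp add: z_def mult.assoc)
qed

definition chi_square_threshold :: "real \<Rightarrow> real \<Rightarrow> real" where
  "chi_square_threshold r L = r + 2 * sqrt (r * L) + 2 * L"

lemma chi_square_threshold_nonneg: "r \<ge> 0 \<Longrightarrow> L \<ge> 0 \<Longrightarrow> chi_square_threshold r L \<ge> 0"
  by (simp add: chi_square_threshold_def)

lemma chi_square_threshold_le:
  assumes "r \<ge> 0" "L \<ge> 0"
  shows "chi_square_threshold r L \<le> 2 * r + 3 * L"
proof -
  have "0 \<le> (sqrt r - sqrt L)\<^sup>2" by simp
  then show ?thesis
    using assms by (simp add: chi_square_threshold_def power2_eq_square algebra_simps real_sqrt_mult)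
qed

lemma sqrt_sum_sq_threshold_le:
  fixes r :: "'k \<Rightarrow> real" and L :: real
  assumes "\<And>k. r k \<ge> 0" "L \<ge> 0"
  shows "sqrt (\<Sum>k\<in>K. (2 * sqrt (chi_square_threshold (r k) L))\<^sup>2)
       \<le> 2 * sqrt (2 * (\<Sum>k\<in>K. r k) + 3 * card K * L)"
proof -
  have "(2 * sqrt (chi_square_threshold (r k) L))\<^sup>2 \<le> 4 * (2 * r k + 3 * L)" for k
    using chi_square_threshold_le[OF assms(1)[of k] assms(2)]
      chi_square_threshold_nonneg[OF assms(1)[of k] assms(2)]
    by (simp add: power_mult_distrib)
  then have "(\<Sum>k\<in>K. (2 * sqrt (chi_square_threshold (r k) L))\<^sup>2) \<le> (\<Sum>k\<in>K. 4 * (2 * r k + 3 * L))"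
    by (rule sum_mono)
  also have "\<dots> = 2\<^sup>2 * (2 * (\<Sum>k\<in>K. r k) + 3 * card K * L)"
    by (simp add: sum.distrib sum_distrib_left)
  finally show ?thesis by (metis real_sqrt_le_mono real_sqrt_mult real_sqrt_abs abs_numeral)
qed

lemma chi_square_chernoff_exponent_le:
  fixes L :: real and n :: nat
  assumes n: "n > 0" and L: "L > 0"
  defines "s \<equiv> sqrt L / (sqrt n + 2 * sqrt L)"
  shows "0 < s" "s < 1 / 2"
    and "exp (- s * chi_square_threshold n L) * (1 / sqrt (1 - 2 * s)) ^ n \<le> exp (- L)"
proof -
  define \<rho> y where "\<rho> = sqrt n" and "y = sqrt L"
  have pos: "\<rho> > 0" "y > 0" using n L by (simp_all add: \<rho>_def y_def)
  have s_eq: "s = y / (\<rho> + 2 * y)" by (simp add: s_def \<rho>_def y_def)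
  have one_minus: "1 - 2 * s = \<rho> / (\<rho> + 2 * y)" unfolding s_eq using pos by (simp add: field_simps)
  show s: "0 < s" "s < 1 / 2" unfolding s_eq using pos by (simp_all add: field_simps)
  have "- ln (1 - 2 * s) \<le> 2 * s + (2 * s)\<^sup>2 / (2 * (1 - 2 * s))"
    using ln_one_minus_ge[of "2 * s"] s by simp
  moreover have "(2 * s)\<^sup>2 / (2 * (1 - 2 * s)) = 2 * (s\<^sup>2 / (1 - 2 * s))"
    using s by (simp add: field_simps power2_eq_square)
  ultimately have log_bound: "- ln (1 - 2 * s) / 2 \<le> s + s\<^sup>2 / (1 - 2 * s)"
    by linarith
  have "(1 / sqrt (1 - 2 * s)) ^ n = exp (n * (- ln (1 - 2 * s) / 2))"
    using s by (simp add: exp_of_nat_mult exp_minus ln_sqrt[symmetric] inverse_eq_divide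
        power_one_over)
  also have "\<dots> \<le> exp (n * (s + s\<^sup>2 / (1 - 2 * s)))"
    using mult_left_mono[OF log_bound, of n] by simp
  finally have "exp (- s * (n + 2 * sqrt (n * L) + 2 * L)) * (1 / sqrt (1 - 2 * s)) ^ n
      \<le> exp (- s * (n + 2 * sqrt (n * L) + 2 * L) + n * (s + s\<^sup>2 / (1 - 2 * s)))"
    unfolding exp_add by (rule mult_left_mono) auto
  also have "- s * (n + 2 * sqrt (n * L) + 2 * L) + n * (s + s\<^sup>2 / (1 - 2 * s)) = - L"
  proof -
    define D where "D = \<rho> + 2 * y"
    have D: "D > 0" using pos by (simp add: D_def)
    have sq: "sqrt (n * L) = \<rho> * y" "real n = \<rho>\<^sup>2" "L = y\<^sup>2"
      using L by (simp_all add: \<rho>_def y_def real_sqrt_mult)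
    have "(y / D)\<^sup>2 / (\<rho> / D) = y\<^sup>2 / (\<rho> * D)"
      using pos D by (simp add: field_simps power2_eq_square)
    moreover have "- (y / D) * (\<rho>\<^sup>2 + 2 * (\<rho> * y) + 2 * y\<^sup>2) + \<rho>\<^sup>2 * (y / D + y\<^sup>2 / (\<rho> * D)) = - y\<^sup>2"
      using pos D by (simp add: field_simps power2_eq_square) (simp add: D_def algebra_simps)
    ultimately show ?thesis
      unfolding sq(1) one_minus unfolding s_eq D_def[symmetric] unfolding sq(2,3) by simp
  qed
  finally show "exp (- s * chi_square_threshold n L) * (1 / sqrt (1 - 2 * s)) ^ n \<le> exp (- L)"
    by (simp add: chi_square_threshold_def)
qed

section \<open>Orthogonal projection onto a subspace\<close>

lemma closest_point_subspace_orthogonal: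
  fixes S :: "'a::euclidean_space set"
  assumes S: "subspace S" and y: "y \<in> S"
  shows "(a - closest_point S a) \<bullet> y = 0"
proof -
  let ?p = "closest_point S a"
  have cc: "convex S" "closed S" using S by (simp_all add: subspace_imp_convex closed_subspace)
  have p: "?p \<in> S" using S by (intro closest_point_in_set cc(2)) (auto dest: subspace_0)
  have "(a - ?p) \<bullet> ((?p + y) - ?p) \<le> 0"
    by (rule closest_point_dot[OF cc subspace_add[OF S p y]])
  moreover have "(a - ?p) \<bullet> ((?p - y) - ?p) \<le> 0"
    by (rule closest_point_dot[OF cc subspace_diff[OF S p y]])
  ultimately show ?thesis by simp
qed

lemma inner_le_norm_closest_point_subspace:
  fixes S :: "'a::euclidean_space set"
  assumes "subspace S" "y \<in> S"
  shows "\<bar>y \<bullet> a\<bar> \<le> norm y * norm (closest_point S a)"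
proof -
  have "y \<bullet> a = y \<bullet> closest_point S a"
    using closest_point_subspace_orthogonal[OF assms, of a] by (simp add: inner_diff inner_commute)
  then show ?thesis using Cauchy_Schwarz_ineq2 by simp
qed

lemma closest_point_subspace_orthonormal_basis:
  fixes S :: "'a::euclidean_space set"
  assumes S: "subspace S" and B: "finite B" "pairwise orthogonal B" "\<And>b. b \<in> B \<Longrightarrow> norm b = 1"
    and span: "span B = S"
  shows "closest_point S a = (\<Sum>b\<in>B. (b \<bullet> a) *\<^sub>R b)"
proof -
  let ?p = "\<Sum>b\<in>B. (b \<bullet> a) *\<^sub>R b"
  have p: "?p \<in> S" unfolding span[symmetric] by (intro span_sum span_scale span_base)
  have basis_inner: "b \<bullet> b' = (if b = b' then 1 else 0)" if "b \<in> B" "b' \<in> B" for b b'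
    using B(2,3) that unfolding pairwise_def orthogonal_def by (auto simp: dot_square_norm)
  have "orthogonal (a - ?p) b" if "b \<in> B" for b
  proof -
    have "b \<bullet> ?p = (\<Sum>b'\<in>B. (b' \<bullet> a) * (b \<bullet> b'))" by (simp add: inner_sum_right)
    also have "\<dots> = b \<bullet> a" using that B(1) by (simp add: basis_inner if_distrib sum.delta cong: if_cong)
    finally show ?thesis by (simp add: orthogonal_def inner_diff inner_commute)
  qed
  then have orth: "(a - ?p) \<bullet> y = 0" if "y \<in> S" for y
    using orthogonal_to_span[of y B "a - ?p"] that span by (simp add: orthogonal_def)
  show ?thesis
  proof (rule closest_point_unique[symmetric])
    show "convex S" "closed S" using S by (simp_all add: subspace_imp_convex closed_subspace)
    show "\<forall>z\<in>S. dist a ?p \<le> dist a z"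
    proof
      fix z assume "z \<in> S"
      then have "(a - ?p) \<bullet> (?p - z) = 0" by (intro orth subspace_diff[OF S p])
      have "(dist a z)\<^sup>2 = (norm ((a - ?p) + (?p - z)))\<^sup>2" by (simp add: dist_norm)
      also have "\<dots> = (norm (a - ?p))\<^sup>2 + (norm (?p - z))\<^sup>2"
        using \<open>(a - ?p) \<bullet> (?p - z) = 0\<close> by (intro norm_add_Pythagorean) (simp add: orthogonal_def)
      finally have "(dist a ?p)\<^sup>2 \<le> (dist a z)\<^sup>2" by (simp add: dist_norm)
      then show "dist a ?p \<le> dist a z" by (simp add: power2_le_iff_abs_le)
    qed
  qed (fact p)
qed

lemma norm_closest_point_subspace_sq:
  fixes S :: "'a::euclidean_space set"
  assumes "subspace S" "finite B" "pairwise orthogonal B" "\<And>b. b \<in> B \<Longrightarrow> norm b = 1"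
    and "span B = S"
  shows "(norm (closest_point S a))\<^sup>2 = (\<Sum>b\<in>B. (b \<bullet> a)\<^sup>2)"
proof -
  have "(norm (\<Sum>b\<in>B. (b \<bullet> a) *\<^sub>R b))\<^sup>2 = (\<Sum>b\<in>B. (norm ((b \<bullet> a) *\<^sub>R b))\<^sup>2)"
    using assms(3) by (intro norm_sum_Pythagorean[OF assms(2)])
      (auto simp: pairwise_def orthogonal_clauses)
  then show ?thesis
    using closest_point_subspace_orthonormal_basis[OF assms] by (simp add: power_mult_distrib assms(4))
qed

lemma closest_point_subspace_scaleR:
  fixes S :: "'a::euclidean_space set"
  assumes "subspace S"
  shows "closest_point S (c *\<^sub>R a) = c *\<^sub>R closest_point S a"
proof -
  obtain B where "B \<subseteq> S" "pairwise orthogonal B" "\<And>b. b \<in> B \<Longrightarrow> norm b = 1"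
    "independent B" "span B = S"
    by (rule orthonormal_basis_subspace[OF assms]) blast
  then have "closest_point S x = (\<Sum>b\<in>B. (b \<bullet> x) *\<^sub>R b)" for x
    by (intro closest_point_subspace_orthonormal_basis[OF assms]) (auto simp: independent_imp_finite)
  then show ?thesis by (simp add: scaleR_sum_right)
qed

lemma borel_measurable_closest_point_subspace:
  fixes S :: "'a::euclidean_space set"
  assumes "subspace S"
  shows "closest_point S \<in> borel_measurable borel"
  using assms by (intro borel_measurable_continuous_onI continuous_on_closest_point)
    (auto simp: subspace_imp_convex closed_subspace dest: subspace_0)

section \<open>Standard Gaussian vectors\<close>

lemma nn_integral_std_normal_exp_quadratic:
  fixes c b :: real
  assumes c: "c > 0"
  shows "(\<integral>\<^sup>+x. ennreal (std_normal_density x * exp ((1 - c) / 2 * x\<^sup>2 + b * x)) \<partial>lborel)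
       = ennreal (exp (b\<^sup>2 / (2 * c)) / sqrt c)"
proof -
  have density: "std_normal_density x * exp ((1 - c) / 2 * x\<^sup>2 + b * x)
      = exp (b\<^sup>2 / (2 * c)) / sqrt c * normal_density (b / c) (1 / sqrt c) x" for x
  proof -
    have "-((x - b / c)\<^sup>2) / (2 * (1 / sqrt c)\<^sup>2) + b\<^sup>2 / (2 * c)
        = - x\<^sup>2 / 2 + ((1 - c) / 2 * x\<^sup>2 + b * x)"
      using c by (simp add: power_divide field_simps power2_eq_square)
    then show ?thesis
      using c by (simp add: normal_density_def std_normal_density_def real_sqrt_divide
          exp_add[symmetric] field_simps)
  qed
  have "(\<integral>\<^sup>+x. ennreal (std_normal_density x * exp ((1 - c) / 2 * x\<^sup>2 + b * x)) \<partial>lborel)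
      = ennreal (exp (b\<^sup>2 / (2 * c)) / sqrt c)
        * (\<integral>\<^sup>+x. ennreal (normal_density (b / c) (1 / sqrt c) x) \<partial>lborel)"
    unfolding density using c
    by (subst nn_integral_cmult[symmetric])
      (auto intro!: nn_integral_cong simp: ennreal_mult[symmetric] simp del: ennreal_mult')
  also have "(\<integral>\<^sup>+x. ennreal (normal_density (b / c) (1 / sqrt c) x) \<partial>lborel) = 1"
    using c by (subst nn_integral_eq_integral) auto
  finally show ?thesis by simp
qed

lemma nn_integral_std_normal_distribution_exp_quadratic:
  fixes c a :: real
  assumes "c > 0"
  shows "(\<integral>\<^sup>+x. ennreal (exp ((1 - c) / 2 * x\<^sup>2 + a * x))
           \<partial>density lborel (\<lambda>x. ennreal (std_normal_density x)))
       = ennreal (exp (a\<^sup>2 / (2 * c)) / sqrt c)"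
  using nn_integral_std_normal_exp_quadratic[OF assms, of a]
  by (subst nn_integral_density) (auto simp: ennreal_mult[symmetric] mult.commute)

lemma (in prob_space) prob_avoid_finite_families:
  fixes E :: "'i::finite \<Rightarrow> 'a set" and F :: "'j::finite \<Rightarrow> 'a set" and a b :: real
  assumes E: "\<And>i. E i \<in> events" "\<And>i. prob (E i) \<le> a"
    and F: "\<And>j. F j \<in> events" "\<And>j. prob (F j) \<le> b"
  shows "space M - (\<Union>i. E i) - (\<Union>j. F j) \<in> events"
    and "prob (space M - (\<Union>i. E i) - (\<Union>j. F j)) \<ge> 1 - (CARD('i) * a + CARD('j) * b)"
proof -
  have union: "(\<Union>i. E i) \<union> (\<Union>j. F j) \<in> events" using E F by auto
  have eq: "space M - (\<Union>i. E i) - (\<Union>j. F j) = space M - ((\<Union>i. E i) \<union> (\<Union>j. F j))" by blast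
  show "space M - (\<Union>i. E i) - (\<Union>j. F j) \<in> events" unfolding eq using union by auto
  have "prob ((\<Union>i. E i) \<union> (\<Union>j. F j)) \<le> prob (\<Union>i. E i) + prob (\<Union>j. F j)"
    using E F by (intro measure_Un_le) auto
  also have "\<dots> \<le> (\<Sum>i\<in>UNIV. prob (E i)) + (\<Sum>j\<in>UNIV. prob (F j))"
    using E F by (intro add_mono finite_measure_subadditive_finite) auto
  also have "\<dots> \<le> CARD('i) * a + CARD('j) * b"
    using sum_mono[of UNIV "\<lambda>i. prob (E i)" "\<lambda>_. a"] sum_mono[of UNIV "\<lambda>j. prob (F j)" "\<lambda>_. b"] E F
    by simp
  finally show "prob (space M - (\<Union>i. E i) - (\<Union>j. F j)) \<ge> 1 - (CARD('i) * a + CARD('j) * b)"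
    unfolding eq prob_compl[OF union] by simp
qed

locale std_gaussian_vector = prob_space M for M :: "'a measure" +
  fixes \<xi> :: "'a \<Rightarrow> real^'T::finite"
  assumes indep_components: "indep_vars (\<lambda>_. borel) (\<lambda>t \<omega>. \<xi> \<omega> $ t) UNIV"
    and std_normal_components:
      "\<And>t. distributed M lborel (\<lambda>\<omega>. \<xi> \<omega> $ t) (\<lambda>x. ennreal (std_normal_density x))"
begin

lemma component_measurable[measurable]: "(\<lambda>\<omega>. \<xi> \<omega> $ t) \<in> borel_measurable M"
  using distributed_measurable[OF std_normal_components[of t]] by simp

lemma vector_measurable[measurable]: "\<xi> \<in> borel_measurable M"
proof (subst borel_measurable_euclidean_space, intro ballI)
  fix i :: "real^'T" assume "i \<in> Basis"
  then obtain t where "i = axis t 1" by (auto simp: Basis_vec_def)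
  then show "(\<lambda>\<omega>. \<xi> \<omega> \<bullet> i) \<in> borel_measurable M" by (simp add: inner_axis)
qed

lemma nn_integral_exp_quadratic_component:
  assumes "c > 0"
  shows "(\<integral>\<^sup>+\<omega>. ennreal (exp ((1 - c) / 2 * (\<xi> \<omega> $ t)\<^sup>2 + b * \<xi> \<omega> $ t)) \<partial>M)
       = ennreal (exp (b\<^sup>2 / (2 * c)) / sqrt c)"
proof -
  have "(\<integral>\<^sup>+\<omega>. ennreal (exp ((1 - c) / 2 * (\<xi> \<omega> $ t)\<^sup>2 + b * \<xi> \<omega> $ t)) \<partial>M)
     = (\<integral>\<^sup>+x. ennreal (std_normal_density x) * ennreal (exp ((1 - c) / 2 * x\<^sup>2 + b * x)) \<partial>lborel)"
    by (rule distributed_nn_integral[OF std_normal_components, symmetric]) simp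
  also have "\<dots> = ennreal (exp (b\<^sup>2 / (2 * c)) / sqrt c)"
    using nn_integral_std_normal_exp_quadratic[OF assms]
    by (simp add: ennreal_mult[symmetric] del: ennreal_mult')
  finally show ?thesis .
qed

lemma nn_integral_exp_quadratic_sum:
  assumes c: "\<And>t. c t > 0"
  shows "(\<integral>\<^sup>+\<omega>. ennreal (exp (\<Sum>t\<in>UNIV. (1 - c t) / 2 * (\<xi> \<omega> $ t)\<^sup>2 + b t * \<xi> \<omega> $ t)) \<partial>M)
       = ennreal (\<Prod>t\<in>UNIV. exp ((b t)\<^sup>2 / (2 * c t)) / sqrt (c t))"
proof -
  have "(\<integral>\<^sup>+\<omega>. ennreal (exp (\<Sum>t\<in>UNIV. (1 - c t) / 2 * (\<xi> \<omega> $ t)\<^sup>2 + b t * \<xi> \<omega> $ t)) \<partial>M)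
     = (\<integral>\<^sup>+\<omega>. (\<Prod>t\<in>UNIV. ennreal (exp ((1 - c t) / 2 * (\<xi> \<omega> $ t)\<^sup>2 + b t * \<xi> \<omega> $ t))) \<partial>M)"
    by (intro nn_integral_cong) (simp add: exp_sum prod_ennreal)
  also have "\<dots> = (\<Prod>t\<in>UNIV. (\<integral>\<^sup>+\<omega>. ennreal (exp ((1 - c t) / 2 * (\<xi> \<omega> $ t)\<^sup>2 + b t * \<xi> \<omega> $ t)) \<partial>M))"
    by (intro indep_vars_nn_integral indep_vars_compose2[OF indep_components]) auto
  also have "\<dots> = (\<Prod>t\<in>UNIV. ennreal (exp ((b t)\<^sup>2 / (2 * c t)) / sqrt (c t)))"
    using c by (intro prod.cong refl nn_integral_exp_quadratic_component)
  also have "\<dots> = ennreal (\<Prod>t\<in>UNIV. exp ((b t)\<^sup>2 / (2 * c t)) / sqrt (c t))"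
    using c by (simp add: prod_ennreal less_imp_le)
  finally show ?thesis .
qed

lemma nn_integral_exp_inner:
  "(\<integral>\<^sup>+\<omega>. ennreal (exp (v \<bullet> \<xi> \<omega>)) \<partial>M) = ennreal (exp ((norm v)\<^sup>2 / 2))"
proof -
  have "(\<integral>\<^sup>+\<omega>. ennreal (exp (v \<bullet> \<xi> \<omega>)) \<partial>M)
     = (\<integral>\<^sup>+\<omega>. ennreal (exp (\<Sum>t\<in>UNIV. (1 - 1) / 2 * (\<xi> \<omega> $ t)\<^sup>2 + v $ t * \<xi> \<omega> $ t)) \<partial>M)"
    by (simp add: inner_vec_def)
  also have "\<dots> = ennreal (\<Prod>t\<in>UNIV. exp ((v $ t)\<^sup>2 / (2 * 1)) / sqrt 1)"
    by (rule nn_integral_exp_quadratic_sum) simp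
  also have "(\<Prod>t\<in>UNIV. exp ((v $ t)\<^sup>2 / (2 * 1)) / sqrt 1) = exp ((norm v)\<^sup>2 / 2)"
    by (simp add: exp_sum[symmetric] norm_vec_def L2_set_def sum_divide_distrib sum_nonneg)
  finally show ?thesis .
qed

lemma nn_integral_exp_weighted_chi_square_le:
  fixes w m :: "'T \<Rightarrow> real" and s :: real
  assumes s: "s \<ge> 0" and w: "\<And>t. w t \<ge> 0"
  shows "(\<integral>\<^sup>+\<omega>. ennreal (exp (- s * (\<Sum>t\<in>UNIV. w t * ((\<xi> \<omega> $ t)\<^sup>2 - 1 + m t * \<xi> \<omega> $ t)))) \<partial>M)
       \<le> ennreal (exp (s\<^sup>2 * (\<Sum>t\<in>UNIV. (w t)\<^sup>2 * (1 + (m t)\<^sup>2 / 2))))"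
proof -
  define c where "c t = 1 + 2 * s * w t" for t
  define b where "b t = - s * w t * m t" for t
  have c: "c t > 0" for t using s w[of t] unfolding c_def by (simp add: add_pos_nonneg)
  have "exp (- s * (\<Sum>t\<in>UNIV. w t * ((\<xi> \<omega> $ t)\<^sup>2 - 1 + m t * \<xi> \<omega> $ t))) = exp (\<Sum>t\<in>UNIV. s * w t)
      * exp (\<Sum>t\<in>UNIV. (1 - c t) / 2 * (\<xi> \<omega> $ t)\<^sup>2 + b t * \<xi> \<omega> $ t)" for \<omega>
    unfolding c_def b_def
    by (simp add: exp_add[symmetric] sum.distrib[symmetric] sum_distrib_left algebra_simps)
  then have "(\<integral>\<^sup>+\<omega>. ennreal (exp (- s * (\<Sum>t\<in>UNIV. w t * ((\<xi> \<omega> $ t)\<^sup>2 - 1 + m t * \<xi> \<omega> $ t)))) \<partial>M)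
      = ennreal (exp (\<Sum>t\<in>UNIV. s * w t))
        * (\<integral>\<^sup>+\<omega>. ennreal (exp (\<Sum>t\<in>UNIV. (1 - c t) / 2 * (\<xi> \<omega> $ t)\<^sup>2 + b t * \<xi> \<omega> $ t)) \<partial>M)"
    by (simp add: ennreal_mult nn_integral_cmult)
  also have "\<dots> = ennreal (exp (\<Sum>t\<in>UNIV. s * w t))
      * ennreal (\<Prod>t\<in>UNIV. exp ((b t)\<^sup>2 / (2 * c t)) / sqrt (c t))"
    by (simp only: nn_integral_exp_quadratic_sum[OF c])
  also have "\<dots> = ennreal (\<Prod>t\<in>UNIV. exp (s * w t) * (exp ((b t)\<^sup>2 / (2 * c t)) / sqrt (c t)))"
  proof -
    have eq: "exp (\<Sum>t\<in>UNIV. s * w t) * (\<Prod>t\<in>UNIV. exp ((b t)\<^sup>2 / (2 * c t)) / sqrt (c t))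
        = (\<Prod>t\<in>UNIV. exp (s * w t) * (exp ((b t)\<^sup>2 / (2 * c t)) / sqrt (c t)))"
      by (simp only: exp_sum[OF finite] prod.distrib)
    have "0 \<le> (\<Prod>t\<in>UNIV. exp ((b t)\<^sup>2 / (2 * c t)) / sqrt (c t))"
      using c by (intro prod_nonneg) (simp add: less_imp_le)
    then show ?thesis unfolding eq[symmetric] by (intro ennreal_mult[symmetric]) simp_all
  qed
  also have "\<dots> \<le> ennreal (\<Prod>t\<in>UNIV. exp (s\<^sup>2 * (w t)\<^sup>2 + (b t)\<^sup>2 / 2))"
  proof (intro ennreal_leI prod_mono conjI)
    fix t
    show "0 \<le> exp (s * w t) * (exp ((b t)\<^sup>2 / (2 * c t)) / sqrt (c t))" using c[of t] by simp
    show "exp (s * w t) * (exp ((b t)\<^sup>2 / (2 * c t)) / sqrt (c t)) \<le> exp (s\<^sup>2 * (w t)\<^sup>2 + (b t)\<^sup>2 / 2)"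
      unfolding c_def using gaussian_lower_mgf_factor_le[of s "w t" "b t"] s w[of t] by simp
  qed
  also have "(\<Prod>t\<in>UNIV. exp (s\<^sup>2 * (w t)\<^sup>2 + (b t)\<^sup>2 / 2))
      = exp (s\<^sup>2 * (\<Sum>t\<in>UNIV. (w t)\<^sup>2 * (1 + (m t)\<^sup>2 / 2)))"
    by (simp add: exp_sum[symmetric] sum_distrib_left b_def algebra_simps power_mult_distrib)
  finally show ?thesis .
qed

lemma prob_weighted_chi_square_le:
  fixes w m :: "'T \<Rightarrow> real" and u V x :: real
  assumes w: "\<And>t. w t \<ge> 0" and u: "u > 0"
    and V: "(\<Sum>t\<in>UNIV. (w t)\<^sup>2 * (1 + (m t)\<^sup>2 / 2)) \<le> V" "V > 0" and x: "x \<le> u\<^sup>2 / (4 * V)"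
  shows "prob {\<omega>\<in>space M. (\<Sum>t\<in>UNIV. w t * ((\<xi> \<omega> $ t)\<^sup>2 - 1 + m t * \<xi> \<omega> $ t)) \<le> - u} \<le> exp (- x)"
proof -
  define s where "s = u / (2 * V)"
  have s: "s > 0" using u V by (simp add: s_def)
  define f where "f \<omega> = (\<Sum>t\<in>UNIV. w t * ((\<xi> \<omega> $ t)\<^sup>2 - 1 + m t * \<xi> \<omega> $ t))" for \<omega>
  have "(\<integral>\<^sup>+\<omega>. ennreal (exp (- s * f \<omega>)) * indicator (space M) \<omega> \<partial>M)
      = (\<integral>\<^sup>+\<omega>. ennreal (exp (- s * f \<omega>)) \<partial>M)"
    by (intro nn_integral_cong) simp
  also have "\<dots> \<le> ennreal (exp (s\<^sup>2 * (\<Sum>t\<in>UNIV. (w t)\<^sup>2 * (1 + (m t)\<^sup>2 / 2))))"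
    unfolding f_def by (rule nn_integral_exp_weighted_chi_square_le[OF less_imp_le[OF s] w])
  also have "\<dots> \<le> ennreal (exp (s\<^sup>2 * V))"
    using V(1) by (intro ennreal_leI) (simp add: mult_left_mono)
  finally have mgf: "(\<integral>\<^sup>+\<omega>. ennreal (exp (- s * f \<omega>)) * indicator (space M) \<omega> \<partial>M)
      \<le> ennreal (exp (s\<^sup>2 * V))" .
  have "emeasure M {\<omega>\<in>space M. f \<omega> \<le> - u}
      \<le> ennreal (exp (s * (- u))) * (\<integral>\<^sup>+\<omega>. ennreal (exp (- s * f \<omega>)) * indicator (space M) \<omega> \<partial>M)"
    unfolding f_def by (rule Chernoff_ineq_nn_integral_le[OF s]) auto
  also have "\<dots> \<le> ennreal (exp (s * (- u))) * ennreal (exp (s\<^sup>2 * V))"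
    using mgf by (rule mult_left_mono) simp
  also have "\<dots> = ennreal (exp (- (u\<^sup>2 / (4 * V))))"
    using V u
    by (simp add: ennreal_mult[symmetric] exp_add[symmetric] s_def power2_eq_square field_simps)
  also have "\<dots> \<le> ennreal (exp (- x))" using x by (intro ennreal_leI) simp
  finally show ?thesis unfolding f_def by (simp add: emeasure_eq_measure)
qed

lemma nn_integral_exp_sum_inner:
  fixes B :: "(real^'T) set"
  assumes B: "finite B" "pairwise orthogonal B" "\<And>b. b \<in> B \<Longrightarrow> norm b = 1"
  shows "(\<integral>\<^sup>+\<omega>. ennreal (exp (\<Sum>b\<in>B. g b * (b \<bullet> \<xi> \<omega>))) \<partial>M) = ennreal (exp ((\<Sum>b\<in>B. (g b)\<^sup>2) / 2))"
proof -
  have "(\<Sum>b\<in>B. g b * (b \<bullet> \<xi> \<omega>)) = (\<Sum>b\<in>B. g b *\<^sub>R b) \<bullet> \<xi> \<omega>" for \<omega>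
    by (simp add: inner_sum_left)
  moreover have "(norm (\<Sum>b\<in>B. g b *\<^sub>R b))\<^sup>2 = (\<Sum>b\<in>B. (norm (g b *\<^sub>R b))\<^sup>2)"
    using B(2) by (intro norm_sum_Pythagorean[OF B(1)]) (auto simp: pairwise_def orthogonal_clauses)
  ultimately show ?thesis using B(3) by (simp add: nn_integral_exp_inner power_mult_distrib)
qed

lemma nn_integral_exp_sum_inner_sq:
  fixes B :: "(real^'T) set" and s :: real
  assumes B: "finite B" "pairwise orthogonal B" "\<And>b. b \<in> B \<Longrightarrow> norm b = 1"
    and s: "0 < s" "s < 1 / 2"
  shows "(\<integral>\<^sup>+\<omega>. ennreal (exp (s * (\<Sum>b\<in>B. (b \<bullet> \<xi> \<omega>)\<^sup>2))) \<partial>M)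
       = ennreal ((1 / sqrt (1 - 2 * s)) ^ card B)"
proof -
  define N0 where "N0 = density lborel (\<lambda>x. ennreal (std_normal_density x))"
  have "prob_space N0" unfolding N0_def by (rule prob_space_normal_density) simp
  then interpret N0: product_sigma_finite "\<lambda>_::real^'T. N0"
    by (simp add: product_sigma_finite_def prob_space_imp_sigma_finite)
  define N where "N = PiM B (\<lambda>_. N0)"
  interpret pair_sigma_finite M N
    unfolding N_def using \<open>prob_space N0\<close>
    by (intro pair_sigma_finite.intro prob_space_imp_sigma_finite prob_space_axioms prob_space_PiM)
  have [simp, measurable_cong]: "sets N0 = sets borel" by (simp add: N0_def)
  note N0_exp = nn_integral_std_normal_distribution_exp_quadratic[folded N0_def]
  txt \<open>Linearise each square by exp(s z^2) = E exp(sqrt(2s) g z) for a standard normal g,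
    exchange the integrals, and integrate the resulting linear form in \<xi> first.\<close>
  define k where "k = sqrt (2 * s)"
  have k: "k\<^sup>2 = 2 * s" using s by (simp add: k_def)
  define F where "F \<omega> g = (\<Prod>b\<in>B. ennreal (exp (k * g b * (b \<bullet> \<xi> \<omega>))))" for \<omega> and g :: "real^'T \<Rightarrow> real"
  have [measurable]: "case_prod F \<in> borel_measurable (M \<Otimes>\<^sub>M N)"
    unfolding F_def N_def by measurable
  have integrate_g: "(\<integral>\<^sup>+g. F \<omega> g \<partial>N) = ennreal (exp (s * (\<Sum>b\<in>B. (b \<bullet> \<xi> \<omega>)\<^sup>2)))" for \<omega>
  proof -
    have "(\<integral>\<^sup>+g. F \<omega> g \<partial>N)
        = (\<Prod>b\<in>B. (\<integral>\<^sup>+x. ennreal (exp ((1 - 1) / 2 * x\<^sup>2 + k * (b \<bullet> \<xi> \<omega>) * x)) \<partial>N0))"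
      unfolding F_def N_def by (subst N0.product_nn_integral_prod) (simp_all add: B mult_ac)
    also have "\<dots> = (\<Prod>b\<in>B. ennreal (exp ((k * (b \<bullet> \<xi> \<omega>))\<^sup>2 / (2 * 1)) / sqrt 1))"
      by (intro prod.cong refl N0_exp) simp
    also have "\<dots> = ennreal (exp (s * (\<Sum>b\<in>B. (b \<bullet> \<xi> \<omega>)\<^sup>2)))"
      by (simp add: power_mult_distrib k prod_ennreal exp_sum B sum_distrib_left)
    finally show ?thesis .
  qed
  have integrate_\<omega>: "(\<integral>\<^sup>+\<omega>. F \<omega> g \<partial>M) = ennreal (exp (s * (\<Sum>b\<in>B. (g b)\<^sup>2)))" for g
    using nn_integral_exp_sum_inner[OF B, of "\<lambda>b. k * g b"]
    by (simp add: F_def prod_ennreal B exp_sum[symmetric] power_mult_distrib k sum_distrib_left mult_ac)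
  have "(\<integral>\<^sup>+\<omega>. ennreal (exp (s * (\<Sum>b\<in>B. (b \<bullet> \<xi> \<omega>)\<^sup>2))) \<partial>M) = (\<integral>\<^sup>+\<omega>. (\<integral>\<^sup>+g. F \<omega> g \<partial>N) \<partial>M)"
    by (simp add: integrate_g)
  also have "\<dots> = (\<integral>\<^sup>+g. (\<integral>\<^sup>+\<omega>. F \<omega> g \<partial>M) \<partial>N)"
    by (rule Fubini'[symmetric]) measurable
  also have "\<dots> = (\<Prod>b\<in>B. (\<integral>\<^sup>+x. ennreal (exp ((1 - (1 - 2 * s)) / 2 * x\<^sup>2 + 0 * x)) \<partial>N0))"
    unfolding integrate_\<omega> N_def
    by (subst N0.product_nn_integral_prod[symmetric])
      (simp_all add: B prod_ennreal exp_sum sum_distrib_left)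
  also have "\<dots> = (\<Prod>b\<in>B. ennreal (exp (0\<^sup>2 / (2 * (1 - 2 * s))) / sqrt (1 - 2 * s)))"
    using s by (intro prod.cong refl N0_exp) simp
  also have "\<dots> = ennreal ((1 / sqrt (1 - 2 * s)) ^ card B)"
    using s by (simp add: ennreal_power)
  finally show ?thesis .
qed

lemma prob_norm_closest_point_sq_gt:
  fixes S :: "(real^'T) set" and L :: real
  assumes S: "subspace S" and L: "L \<ge> 0"
  shows "prob {\<omega>\<in>space M. chi_square_threshold (dim S) L < (norm (closest_point S (\<xi> \<omega>)))\<^sup>2}
       \<le> exp (- L)"
proof -
  obtain B where B: "B \<subseteq> S" "pairwise orthogonal B" "\<And>b. b \<in> B \<Longrightarrow> norm b = 1"
      "independent B" "card B = dim S" "span B = S"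
    by (rule orthonormal_basis_subspace[OF S]) blast
  have fin: "finite B" using B(4) by (rule independent_imp_finite)
  define a where "a = chi_square_threshold (card B) L"
  define f where "f \<omega> = (\<Sum>b\<in>B. (b \<bullet> \<xi> \<omega>)\<^sup>2)" for \<omega>
  have [measurable]: "f \<in> borel_measurable M" unfolding f_def by measurable
  have event: "{\<omega>\<in>space M. chi_square_threshold (dim S) L < (norm (closest_point S (\<xi> \<omega>)))\<^sup>2}
      = {\<omega>\<in>space M. a < f \<omega>}"
    using norm_closest_point_subspace_sq[OF S fin B(2,3,6)] by (simp add: a_def f_def B(5))
  consider "L = 0" | "B = {}" | "L > 0" "card B > 0"
    using L fin by fastforce
  then show ?thesis
  proof cases
    case 2
    then have "{\<omega>\<in>space M. a < f \<omega>} = {}" using L by (auto simp: a_def f_def chi_square_threshold_def)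
    then show ?thesis unfolding event by (metis exp_ge_zero measure_empty)
  next
    case 3
    define s where "s = sqrt L / (sqrt (card B) + 2 * sqrt L)"
    note s = chi_square_chernoff_exponent_le[OF 3(2,1), folded s_def]
    have "emeasure M {\<omega>\<in>space M. a < f \<omega>} \<le> emeasure M {\<omega>\<in>space M. a \<le> f \<omega>}"
      by (intro emeasure_mono) auto
    also have "\<dots> \<le> ennreal (exp (- s * a)) * (\<integral>\<^sup>+\<omega>. ennreal (exp (s * f \<omega>)) * indicator (space M) \<omega> \<partial>M)"
      by (rule Chernoff_ineq_nn_integral_ge) (use s in auto)
    also have "(\<integral>\<^sup>+\<omega>. ennreal (exp (s * f \<omega>)) * indicator (space M) \<omega> \<partial>M)
        = (\<integral>\<^sup>+\<omega>. ennreal (exp (s * f \<omega>)) \<partial>M)"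
      by (intro nn_integral_cong) simp
    also have "\<dots> = ennreal ((1 / sqrt (1 - 2 * s)) ^ card B)"
      unfolding f_def by (rule nn_integral_exp_sum_inner_sq[OF fin B(2,3) s(1,2)])
    also have "ennreal (exp (- s * a)) * \<dots> = ennreal (exp (- s * a) * (1 / sqrt (1 - 2 * s)) ^ card B)"
      using s by (simp add: ennreal_mult)
    also have "\<dots> \<le> ennreal (exp (- L))"
      using s(3) unfolding a_def by (rule ennreal_leI)
    finally show ?thesis unfolding event by (simp add: emeasure_eq_measure)
  qed simp
qed

end

section \<open>The ScHeDs program\<close>

lemma restr_diff: "restr G (a - b) = restr G a - restr G b"
  by (simp add: restr_def vec_eq_iff)

lemma Xg_diff: "Xg X G (a - b) = Xg X G a - Xg X G b"
  by (simp add: Xg_def restr_diff matrix_vector_mult_diff_distrib)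

lemma Xg_scaleR: "Xg X G (c *\<^sub>R a) = c *\<^sub>R Xg X G a"
proof -
  have "restr G (c *\<^sub>R a) = c *\<^sub>R restr G a" by (simp add: restr_def vec_eq_iff)
  then show ?thesis by (simp add: Xg_def matrix_vector_mult_scaleR)
qed

lemma linear_Xg: "linear (Xg X G)"
proof -
  have "linear (restr G)" by (rule linearI) (simp_all add: restr_def vec_eq_iff)
  then have "linear ((*v) X \<circ> restr G)" by (rule linear_compose[OF _ matrix_vector_mul_linear])
  then show ?thesis by (simp add: o_def Xg_def[abs_def])
qed

lemma subspace_colspace: "subspace (colspace X G)"
  unfolding colspace_def by (rule linear_subspace_image[OF linear_Xg subspace_UNIV])

lemma sum_Xg_partition:
  fixes G :: "'k::finite \<Rightarrow> 'p::finite set"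
  assumes "\<forall>k k'. k \<noteq> k' \<longrightarrow> G k \<inter> G k' = {}" "(\<Union>k. G k) = UNIV"
  shows "(\<Sum>k\<in>UNIV. Xg X (G k) d) = X *v d"
proof -
  have "(\<Sum>k\<in>UNIV. restr (G k) d) = d"
  proof (subst vec_eq_iff, intro allI)
    fix j
    obtain k0 where k0: "j \<in> G k0" using assms(2) by blast
    then have "(\<Sum>k\<in>UNIV. restr (G k) d) $ j = (\<Sum>k\<in>UNIV. if k = k0 then d $ j else 0)"
      unfolding sum_component restr_def using assms(1) by (intro sum.cong) auto
    then show "(\<Sum>k\<in>UNIV. restr (G k) d) $ j = d $ j" by simp
  qed
  then show ?thesis
    by (simp add: Xg_def linear_sum[OF matrix_vector_mul_linear, symmetric])
qed

lemma Xg_eq_0_if_notin_Kstar: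
  assumes "k \<notin> Kstar G \<phi>"
  shows "Xg X (G k) \<phi> = 0"
proof -
  have "(\<Sum>j\<in>G k. \<bar>\<phi> $ j\<bar>) = 0" using assms by (simp add: Kstar_def)
  then have "restr (G k) \<phi> = 0" by (simp add: sum_nonneg_eq_0_iff restr_def vec_eq_iff)
  then show ?thesis by (simp add: Xg_def)
qed

lemma inner_Xg_le_norm_Proj: "\<bar>Xg X G \<delta> \<bullet> w\<bar> \<le> norm (Xg X G \<delta>) * norm (Proj X G w)"
  unfolding Proj_def by (rule inner_le_norm_closest_point_subspace[OF subspace_colspace])
    (simp add: colspace_def)

lemma dmul_diff: "dmul y (a - b) = dmul y a - dmul y b"
  by (simp add: dmul_def vec_eq_iff algebra_simps)

lemma dmul_scaleR: "dmul y (c *\<^sub>R a) = c *\<^sub>R dmul y a"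
  by (simp add: dmul_def vec_eq_iff)

lemma schd_cone_condition:
  fixes G :: "'k::finite \<Rightarrow> 'p::finite set" and X :: "real^'p^'T::finite"
  assumes lam: "\<forall>k. lam k \<ge> 0"
    and supp: "\<forall>k. k \<notin> Ks \<longrightarrow> Xg X (G k) \<phi>t = 0"
    and obj: "schd_obj X G lam \<phi>h \<le> schd_obj X G lam \<phi>t"
  shows "(\<Sum>k\<in>-Ks. lam k * norm (Xg X (G k) (\<phi>h - \<phi>t)))
       \<le> (\<Sum>k\<in>Ks. lam k * norm (Xg X (G k) (\<phi>h - \<phi>t)))"
proof -
  let ?n = "\<lambda>\<phi> k. lam k * norm (Xg X (G k) \<phi>)"
  have split: "(\<Sum>k\<in>UNIV. f k) = (\<Sum>k\<in>Ks. f k) + (\<Sum>k\<in>-Ks. f k)" for f :: "'k \<Rightarrow> real"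
  proof -
    have "UNIV = Ks \<union> -Ks" by auto
    then show ?thesis by (metis sum.union_disjoint finite Compl_disjoint)
  qed
  have outside: "?n (\<phi>h - \<phi>t) k = ?n \<phi>h k" "?n \<phi>t k = 0" if "k \<in> -Ks" for k
    using supp that by (simp_all add: Xg_diff)
  have inside: "?n \<phi>t k - ?n (\<phi>h - \<phi>t) k \<le> ?n \<phi>h k" for k
  proof -
    have "norm (Xg X (G k) \<phi>t) \<le> norm (Xg X (G k) \<phi>h) + norm (Xg X (G k) (\<phi>h - \<phi>t))"
      using norm_triangle_sub[of "Xg X (G k) \<phi>t" "Xg X (G k) \<phi>h"]
      by (simp add: Xg_diff norm_minus_commute)
    then show ?thesis using lam by (simp add: algebra_simps) (metis distrib_left mult_left_mono)
  qed
  have "(\<Sum>k\<in>-Ks. ?n (\<phi>h - \<phi>t) k) + (\<Sum>k\<in>Ks. ?n \<phi>t k - ?n (\<phi>h - \<phi>t) k)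
      \<le> (\<Sum>k\<in>-Ks. ?n \<phi>h k) + (\<Sum>k\<in>Ks. ?n \<phi>h k)"
    by (intro add_mono sum_mono) (simp add: outside(1), rule inside)
  also have "\<dots> \<le> (\<Sum>k\<in>Ks. ?n \<phi>t k) + (\<Sum>k\<in>-Ks. ?n \<phi>t k)"
    using obj by (simp add: schd_obj_def split[of "?n _"])
  also have "(\<Sum>k\<in>-Ks. ?n \<phi>t k) = 0" using outside(2) by (intro sum.neutral) blast
  finally show ?thesis by (simp add: sum_subtractf)
qed

lemma schd_feasible_pair_inequality:
  fixes G :: "'k::finite \<Rightarrow> 'p::finite set" and X :: "real^'p^'T::finite"
  assumes partition: "\<forall>k k'. k \<noteq> k' \<longrightarrow> G k \<inter> G k' = {}" "(\<Union>k. G k) = UNIV"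
    and h: "schd_feasible X R G lam Y \<phi>h \<alpha>h vh" and t: "schd_feasible X R G lam Y \<phi>t \<alpha>t vt"
  shows "(norm (X *v (\<phi>h - \<phi>t)))\<^sup>2
       \<le> (X *v (\<phi>h - \<phi>t)) \<bullet> dmul Y (R *v (\<alpha>h - \<alpha>t))
         + 2 * (\<Sum>k\<in>UNIV. lam k * norm (Xg X (G k) (\<phi>h - \<phi>t)))"
proof -
  define \<delta> where "\<delta> = \<phi>h - \<phi>t"
  define \<rho>h \<rho>t where "\<rho>h = dmul Y (R *v \<alpha>h) - X *v \<phi>h" and "\<rho>t = dmul Y (R *v \<alpha>t) - X *v \<phi>t"
  have residual_bound: "Xg X (G k) \<delta> \<bullet> (\<rho>t - \<rho>h) \<le> 2 * (lam k * norm (Xg X (G k) \<delta>))" for k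
  proof -
    have "norm (Proj X (G k) \<rho>) \<le> lam k \<Longrightarrow> \<bar>Xg X (G k) \<delta> \<bullet> \<rho>\<bar> \<le> lam k * norm (Xg X (G k) \<delta>)" for \<rho>
      using inner_Xg_le_norm_Proj[of X "G k" \<delta> \<rho>]
      by (smt (verit) mult.commute mult_left_mono norm_ge_zero)
    moreover have "norm (Proj X (G k) \<rho>h) \<le> lam k" "norm (Proj X (G k) \<rho>t) \<le> lam k"
      using h t by (simp_all add: schd_feasible_def \<rho>h_def \<rho>t_def)
    ultimately show ?thesis by (smt (verit) inner_diff_right)
  qed
  have "X *v \<delta> = dmul Y (R *v (\<alpha>h - \<alpha>t)) - \<rho>h + \<rho>t"
    by (simp add: \<delta>_def \<rho>h_def \<rho>t_def matrix_vector_mult_diff_distrib dmul_diff)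
  then have "(norm (X *v \<delta>))\<^sup>2 = (X *v \<delta>) \<bullet> dmul Y (R *v (\<alpha>h - \<alpha>t)) + (X *v \<delta>) \<bullet> (\<rho>t - \<rho>h)"
    unfolding power2_norm_eq_inner by (metis inner_add_right diff_add_eq add_diff_eq)
  also have "(X *v \<delta>) \<bullet> (\<rho>t - \<rho>h) = (\<Sum>k\<in>UNIV. Xg X (G k) \<delta> \<bullet> (\<rho>t - \<rho>h))"
    by (simp add: sum_Xg_partition[OF partition, symmetric] inner_sum_left)
  also have "\<dots> \<le> 2 * (\<Sum>k\<in>UNIV. lam k * norm (Xg X (G k) \<delta>))"
    unfolding sum_distrib_left by (intro sum_mono residual_bound)
  finally show ?thesis by (simp add: \<delta>_def)
qed

lemma schd_oracle_inequality:
  fixes G :: "'k::finite \<Rightarrow> 'p::finite set" and X :: "real^'p^'T::finite"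
  assumes partition: "\<forall>k k'. k \<noteq> k' \<longrightarrow> G k \<inter> G k' = {}" "(\<Union>k. G k) = UNIV"
    and lam: "\<forall>k. lam k \<ge> 0"
    and gre: "GRE X G lam N \<kappa>" and \<kappa>: "\<kappa> > 0" and Ks: "card Ks \<le> N"
    and supp: "\<forall>k. k \<notin> Ks \<longrightarrow> Xg X (G k) \<phi>t = 0"
    and t: "schd_feasible X R G lam Y \<phi>t \<alpha>t vt"
    and h: "schd_min X R G lam Y \<phi>h \<alpha>h vh"
  shows "norm (X *v (\<phi>h - \<phi>t))
       \<le> norm (dmul Y (R *v (\<alpha>h - \<alpha>t))) + 4 * sqrt (\<Sum>k\<in>Ks. (lam k)\<^sup>2) / \<kappa>"
proof -
  define n where "n k = norm (Xg X (G k) (\<phi>h - \<phi>t))" for k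
  define u where "u = dmul Y (R *v (\<alpha>h - \<alpha>t))"
  define e where "e = norm (X *v (\<phi>h - \<phi>t))"
  define S where "S = sqrt (\<Sum>k\<in>Ks. (lam k)\<^sup>2)"
  have cone: "(\<Sum>k\<in>-Ks. lam k * n k) \<le> (\<Sum>k\<in>Ks. lam k * n k)"
    unfolding n_def using h t
    by (intro schd_cone_condition[OF lam supp]) (auto simp: schd_min_def)
  have support_dominates: "(\<Sum>k\<in>UNIV. lam k * n k) \<le> 2 * (\<Sum>k\<in>Ks. lam k * n k)"
    using cone sum.union_disjoint[of Ks "-Ks" "\<lambda>k. lam k * n k"] by (simp add: Compl_partition)
  have cauchy_schwarz: "(\<Sum>k\<in>Ks. lam k * n k) \<le> S * sqrt (\<Sum>k\<in>Ks. (n k)\<^sup>2)"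
    using L2_set_mult_ineq[of lam n Ks] lam by (simp add: S_def L2_set_def n_def)
  have "\<kappa>\<^sup>2 * (\<Sum>k\<in>Ks. (n k)\<^sup>2) \<le> e\<^sup>2"
    using gre Ks cone unfolding GRE_def n_def e_def by blast
  then have "\<kappa> * sqrt (\<Sum>k\<in>Ks. (n k)\<^sup>2) \<le> e"
    using \<kappa> real_sqrt_le_mono by (fastforce simp: real_sqrt_mult e_def)
  then have "S * sqrt (\<Sum>k\<in>Ks. (n k)\<^sup>2) \<le> S * (e / \<kappa>)"
    using \<kappa> by (intro mult_left_mono) (simp_all add: field_simps S_def sum_nonneg)
  with support_dominates cauchy_schwarz have "(\<Sum>k\<in>UNIV. lam k * n k) \<le> 2 * (S * (e / \<kappa>))"
    by linarith
  moreover have "(X *v (\<phi>h - \<phi>t)) \<bullet> u \<le> e * norm u"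
    unfolding e_def by (rule norm_cauchy_schwarz)
  moreover have "e\<^sup>2 \<le> (X *v (\<phi>h - \<phi>t)) \<bullet> u + 2 * (\<Sum>k\<in>UNIV. lam k * n k)"
    using schd_feasible_pair_inequality[OF partition _ t] h
    unfolding schd_min_def n_def u_def e_def by blast
  ultimately have "e\<^sup>2 \<le> e * norm u + 2 * (2 * (S * (e / \<kappa>)))" by linarith
  also have "\<dots> = e * (norm u + 4 * S / \<kappa>)" by (simp add: algebra_simps)
  finally have "e\<^sup>2 \<le> e * (norm u + 4 * S / \<kappa>)" .
  moreover have "0 \<le> norm u + 4 * S / \<kappa>" using \<kappa> by (simp add: S_def sum_nonneg)
  ultimately have "e \<le> norm u + 4 * S / \<kappa>"
    by (cases "e = 0") (simp_all add: power2_eq_square e_def)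
  then show ?thesis by (simp add: e_def u_def S_def)
qed

lemma schd_feasible_rescaled_truth:
  fixes c :: real and e :: "real^'T::finite" and R :: "real^'q::finite^'T"
  assumes c: "c > 0"
    and model: "dmul Y (R *v \<alpha>) = X *v \<phi> + e"
    and pos: "\<forall>t. (R *v \<alpha>) $ t > 0"
    and proj: "\<forall>k. c * norm (Proj X (G k) e) \<le> lam k"
    and dual: "\<forall>l. (\<Sum>t\<in>UNIV. R $ t $ l / (R *v \<alpha>) $ t)
      \<le> c\<^sup>2 * (\<Sum>t\<in>UNIV. R $ t $ l / (R *v \<alpha>) $ t * ((e $ t)\<^sup>2 + (X *v \<phi>) $ t * e $ t))"
  shows "schd_feasible X R G lam Y (c *\<^sub>R \<phi>) (c *\<^sub>R \<alpha>) (\<chi> t. 1 / (c * (R *v \<alpha>) $ t))"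
proof -
  define w where "w l t = R $ t $ l / (R *v \<alpha>) $ t" for l t
  have residual: "dmul Y (R *v (c *\<^sub>R \<alpha>)) - X *v (c *\<^sub>R \<phi>) = c *\<^sub>R e"
    by (simp add: matrix_vector_mult_scaleR dmul_scaleR model scaleR_right_distrib)
  have "(transpose R *v (\<chi> t. 1 / (c * (R *v \<alpha>) $ t))) $ l
      \<le> (transpose R *v dmul Y (c *\<^sub>R e)) $ l" for l
  proof -
    have Y: "Y $ t = ((X *v \<phi>) $ t + e $ t) / (R *v \<alpha>) $ t" for t
      using arg_cong[OF model, of "\<lambda>v. v $ t"] pos[rule_format, of t]
      by (simp add: dmul_def field_simps)
    have "(transpose R *v (\<chi> t. 1 / (c * (R *v \<alpha>) $ t))) $ l = (\<Sum>t\<in>UNIV. w l t) / c"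
      by (simp add: matrix_vector_mult_def transpose_def w_def sum_divide_distrib mult.commute)
    also have "\<dots> \<le> c * (\<Sum>t\<in>UNIV. w l t * ((e $ t)\<^sup>2 + (X *v \<phi>) $ t * e $ t))"
      using dual c by (simp add: w_def pos_divide_le_eq power2_eq_square mult_ac)
    also have "\<dots> = (transpose R *v dmul Y (c *\<^sub>R e)) $ l"
      by (simp add: matrix_vector_mult_def transpose_def dmul_def Y w_def sum_distrib_left
          power2_eq_square field_simps)
    finally show ?thesis .
  qed
  moreover have "norm (Proj X (G k) (c *\<^sub>R e)) \<le> lam k" for k
    using proj c unfolding Proj_def by (simp add: closest_point_subspace_scaleR[OF subspace_colspace])
  ultimately show ?thesis
    using c pos unfolding schd_feasible_def residual
    by (auto simp: matrix_vector_mult_scaleR less_imp_le)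
qed

lemma schd_error_bound:
  fixes G :: "'k::finite \<Rightarrow> 'p::finite set" and X :: "real^'p^'T::finite" and R :: "real^'q::finite^'T"
    and e :: "real^'T" and D :: real
  assumes partition: "\<forall>k k'. k \<noteq> k' \<longrightarrow> G k \<inter> G k' = {}" "(\<Union>k. G k) = UNIV"
    and model: "dmul Y (R *v \<alpha>s) = X *v \<phi>s + e"
    and pos: "\<forall>t. (R *v \<alpha>s) $ t > 0" and D: "D \<ge> 0"
    and proj: "\<forall>k. (1 + D) * norm (Proj X (G k) e) \<le> lam k"
    and dual: "\<forall>l. (\<Sum>t\<in>UNIV. R $ t $ l / (R *v \<alpha>s) $ t)
      \<le> (1 + D)\<^sup>2 * (\<Sum>t\<in>UNIV. R $ t $ l / (R *v \<alpha>s) $ t * ((e $ t)\<^sup>2 + (X *v \<phi>s) $ t * e $ t))"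
    and gre: "GRE X G lam (card (Kstar G \<phi>s)) \<kappa>" and \<kappa>: "\<kappa> > 0"
    and h: "schd_min X R G lam Y \<phi>h \<alpha>h vh"
  shows "norm (X *v (\<phi>h - \<phi>s))
       \<le> D * (2 * norm (X *v \<phi>s) + norm e) + 4 * sqrt (\<Sum>k\<in>Kstar G \<phi>s. (lam k)\<^sup>2) / \<kappa>
         + norm (dmul Y (R *v (\<alpha>h - \<alpha>s)))"
proof -
  define c where "c = 1 + D"
  have c: "c > 0" using D by (simp add: c_def)
  have lam: "\<forall>k. lam k \<ge> 0" using proj c by (smt (verit) c_def mult_nonneg_nonneg norm_ge_zero)
  have "norm (X *v (\<phi>h - c *\<^sub>R \<phi>s))
      \<le> norm (dmul Y (R *v (\<alpha>h - c *\<^sub>R \<alpha>s))) + 4 * sqrt (\<Sum>k\<in>Kstar G \<phi>s. (lam k)\<^sup>2) / \<kappa>"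
  proof (rule schd_oracle_inequality[OF partition lam gre \<kappa> order_refl _ _ h])
    show "\<forall>k. k \<notin> Kstar G \<phi>s \<longrightarrow> Xg X (G k) (c *\<^sub>R \<phi>s) = 0"
      by (simp add: Xg_scaleR Xg_eq_0_if_notin_Kstar)
    show "schd_feasible X R G lam Y (c *\<^sub>R \<phi>s) (c *\<^sub>R \<alpha>s) (\<chi> t. 1 / (c * (R *v \<alpha>s) $ t))"
      using proj dual by (intro schd_feasible_rescaled_truth[OF c model pos]) (simp_all add: c_def)
  qed
  moreover have "norm (X *v (\<phi>h - \<phi>s)) \<le> norm (X *v (\<phi>h - c *\<^sub>R \<phi>s)) + D * norm (X *v \<phi>s)"
  proof -
    have "X *v (\<phi>h - \<phi>s) = X *v (\<phi>h - c *\<^sub>R \<phi>s) + D *\<^sub>R (X *v \<phi>s)"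
      by (simp add: c_def matrix_vector_mult_diff_distrib matrix_vector_mult_scaleR algebra_simps)
    then show ?thesis
      using D norm_triangle_ineq[of "X *v (\<phi>h - c *\<^sub>R \<phi>s)" "D *\<^sub>R (X *v \<phi>s)"] by simp
  qed
  moreover have "norm (dmul Y (R *v (\<alpha>h - c *\<^sub>R \<alpha>s)))
      \<le> norm (dmul Y (R *v (\<alpha>h - \<alpha>s))) + D * (norm (X *v \<phi>s) + norm e)"
  proof -
    have "dmul Y (R *v (\<alpha>h - c *\<^sub>R \<alpha>s)) = dmul Y (R *v (\<alpha>h - \<alpha>s)) - D *\<^sub>R (X *v \<phi>s + e)"
      by (simp only: matrix_vector_mult_diff_distrib matrix_vector_mult_scaleR dmul_diff dmul_scaleR
          model) (simp add: c_def algebra_simps)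
    then have "norm (dmul Y (R *v (\<alpha>h - c *\<^sub>R \<alpha>s)))
        \<le> norm (dmul Y (R *v (\<alpha>h - \<alpha>s))) + D * norm (X *v \<phi>s + e)"
      using D norm_triangle_ineq4[of "dmul Y (R *v (\<alpha>h - \<alpha>s))" "D *\<^sub>R (X *v \<phi>s + e)"] by simp
    also have "D * norm (X *v \<phi>s + e) \<le> D * (norm (X *v \<phi>s) + norm e)"
      using D by (intro mult_left_mono norm_triangle_ineq)
    finally show ?thesis by simp
  qed
  ultimately show ?thesis by (simp add: algebra_simps)
qed

lemma schd_error_bound_chi_square_threshold:
  fixes G :: "'k::finite \<Rightarrow> 'p::finite set" and X :: "real^'p^'T::finite" and R :: "real^'q::finite^'T"
    and e :: "real^'T" and D L :: real
  assumes partition: "\<forall>k k'. k \<noteq> k' \<longrightarrow> G k \<inter> G k' = {}" "(\<Union>k. G k) = UNIV"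
    and model: "dmul Y (R *v \<alpha>s) = X *v \<phi>s + e"
    and pos: "\<forall>t. (R *v \<alpha>s) $ t > 0" and D: "0 \<le> D" "D \<le> 1" and L: "L \<ge> 0"
    and lam: "\<forall>k. lam k = 2 * sqrt (chi_square_threshold (grank X (G k)) L)"
    and proj: "\<forall>k. (norm (Proj X (G k) e))\<^sup>2 \<le> chi_square_threshold (grank X (G k)) L"
    and dual: "\<forall>l. (\<Sum>t\<in>UNIV. R $ t $ l / (R *v \<alpha>s) $ t)
      \<le> (1 + D)\<^sup>2 * (\<Sum>t\<in>UNIV. R $ t $ l / (R *v \<alpha>s) $ t * ((e $ t)\<^sup>2 + (X *v \<phi>s) $ t * e $ t))"
    and gre: "GRE X G lam (card (Kstar G \<phi>s)) \<kappa>" and \<kappa>: "\<kappa> > 0"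
    and h: "schd_min X R G lam Y \<phi>h \<alpha>h vh"
  shows "norm (X *v (\<phi>h - \<phi>s))
       \<le> D * (2 * norm (X *v \<phi>s) + norm e)
         + (8 / \<kappa>) * sqrt (2 * real (sstar X G \<phi>s) + 3 * real (card (Kstar G \<phi>s)) * L)
         + norm (dmul Y (R *v (\<alpha>h - \<alpha>s)))"
proof -
  have "(1 + D) * norm (Proj X (G k) e) \<le> lam k" for k
  proof -
    have "norm (Proj X (G k) e) \<le> sqrt (chi_square_threshold (grank X (G k)) L)"
      using proj by (intro real_le_rsqrt) simp
    then show ?thesis using D lam by (simp add: mult_mono)
  qed
  then have "norm (X *v (\<phi>h - \<phi>s)) \<le> D * (2 * norm (X *v \<phi>s) + norm e)
      + 4 * sqrt (\<Sum>k\<in>Kstar G \<phi>s. (lam k)\<^sup>2) / \<kappa> + norm (dmul Y (R *v (\<alpha>h - \<alpha>s)))"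
    using D(1) dual by (intro schd_error_bound[OF partition model pos _ _ _ gre \<kappa> h]) auto
  moreover have "sqrt (\<Sum>k\<in>Kstar G \<phi>s. (lam k)\<^sup>2)
      \<le> 2 * sqrt (2 * real (sstar X G \<phi>s) + 3 * real (card (Kstar G \<phi>s)) * L)"
    using sqrt_sum_sq_threshold_le[of "\<lambda>k. real (grank X (G k))" L "Kstar G \<phi>s"] L lam
    unfolding sstar_def of_nat_sum by simp
  ultimately show ?thesis using \<kappa> by (simp add: field_simps)
qed

section \<open>The constants and the dual constraints\<close>

lemma C1_ge: "(1 / real CARD('T)) * (\<Sum>t\<in>UNIV. (R $ t $ l)\<^sup>2 * ((X *v \<phi>) $ t)\<^sup>2 / ((R *v \<alpha>) $ t)\<^sup>2)
    \<le> C1 X R \<phi> (\<alpha> :: real^'q::finite)"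
  for R :: "real^'q^'T::finite"
  unfolding C1_def by (rule Max_ge) auto

lemma C2_ge: "(1 / real CARD('T)) * (\<Sum>t\<in>UNIV. (R $ t $ l)\<^sup>2 / ((R *v \<alpha>) $ t)\<^sup>2)
    \<le> C2 R (\<alpha> :: real^'q::finite)"
  for R :: "real^'q^'T::finite"
  unfolding C2_def by (rule Max_ge) auto

lemma C3_le: "C3 R (\<alpha> :: real^'q::finite)
    \<le> (1 / real CARD('T)) * (\<Sum>t\<in>UNIV. R $ t $ l / (R *v \<alpha>) $ t)"
  for R :: "real^'q^'T::finite"
  unfolding C3_def by (rule Min_le) auto

lemma C1_nonneg: "C1 X R \<phi> \<alpha> \<ge> 0"
  by (rule order_trans[OF _ C1_ge]) (simp add: sum_nonneg)

lemma C2_pos: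
  fixes R :: "real^'q::finite^'T::finite"
  assumes "C3 R \<alpha> > 0"
  shows "C2 R \<alpha> > 0"
proof -
  fix l
  have "0 < (\<Sum>t\<in>UNIV. R $ t $ l / (R *v \<alpha>) $ t) / real CARD('T)"
    using C3_le[of R \<alpha> l] assms by simp
  then have "0 < (\<Sum>t\<in>UNIV. R $ t $ l / (R *v \<alpha>) $ t)"
    by (simp add: zero_less_divide_iff)
  then obtain t where "R $ t $ l / (R *v \<alpha>) $ t \<noteq> 0"
    by (metis (no_types, lifting) less_irrefl sum.neutral)
  then have "(R $ t $ l)\<^sup>2 / ((R *v \<alpha>) $ t)\<^sup>2 > 0" by (simp add: power_divide[symmetric])
  then have "0 < (\<Sum>t\<in>UNIV. (R $ t $ l)\<^sup>2 / ((R *v \<alpha>) $ t)\<^sup>2)"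
    by (intro sum_pos2[of UNIV t]) auto
  then have "0 < (\<Sum>t\<in>UNIV. (R $ t $ l)\<^sup>2 / ((R *v \<alpha>) $ t)\<^sup>2) / real CARD('T)" by simp
  then show ?thesis using C2_ge[of R l \<alpha>] by simp
qed

lemma sum_dual_weights_ge:
  fixes R :: "real^'q::finite^'T::finite"
  shows "(\<Sum>t\<in>UNIV. R $ t $ l / (R *v \<alpha>) $ t) \<ge> real CARD('T) * C3 R \<alpha>"
  using C3_le[of R \<alpha> l] by (simp add: field_simps)

lemma sum_dual_weights_sq_le:
  fixes R :: "real^'q::finite^'T::finite"
  shows "(\<Sum>t\<in>UNIV. (R $ t $ l / (R *v \<alpha>) $ t)\<^sup>2 * (1 + ((X *v \<phi>) $ t)\<^sup>2 / 2))
       \<le> real CARD('T) * (C2 R \<alpha> + C1 X R \<phi> \<alpha> / 2)"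
proof -
  have "(\<Sum>t\<in>UNIV. (R $ t $ l / (R *v \<alpha>) $ t)\<^sup>2 * (1 + ((X *v \<phi>) $ t)\<^sup>2 / 2))
      = (\<Sum>t\<in>UNIV. (R $ t $ l)\<^sup>2 / ((R *v \<alpha>) $ t)\<^sup>2)
        + (\<Sum>t\<in>UNIV. (R $ t $ l)\<^sup>2 * ((X *v \<phi>) $ t)\<^sup>2 / ((R *v \<alpha>) $ t)\<^sup>2) / 2"
    by (simp add: power_divide algebra_simps add_divide_distrib sum.distrib sum_divide_distrib)
  also have "\<dots> \<le> real CARD('T) * (C2 R \<alpha> + C1 X R \<phi> \<alpha> / 2)"
    using C1_ge[of R l X \<phi> \<alpha>] C2_ge[of R l \<alpha>] by (simp add: field_simps)
  finally show ?thesis .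
qed

lemma C4_scaled_bounds:
  fixes X :: "real^'p::finite^'T::finite" and R :: "real^'q::finite^'T" and x :: real
  assumes C3: "C3 R \<alpha> > 0" and x: "x > 0"
    and T: "real CARD('T) \<ge> 8 * (C4 X R \<phi> \<alpha>)\<^sup>2 * x"
  shows "0 \<le> C4 X R \<phi> \<alpha> * sqrt (8 / real CARD('T) * x)"
    and "C4 X R \<phi> \<alpha> * sqrt (8 / real CARD('T) * x) \<le> 1"
proof -
  show nonneg: "0 \<le> C4 X R \<phi> \<alpha> * sqrt (8 / real CARD('T) * x)"
    using C3 C2_pos[OF C3] C1_nonneg[of X R \<phi> \<alpha>] x by (simp add: C4_def)
  have "(C4 X R \<phi> \<alpha> * sqrt (8 / real CARD('T) * x))\<^sup>2 \<le> 1"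
    using T x by (simp add: power_mult_distrib divide_le_eq)
  then show "C4 X R \<phi> \<alpha> * sqrt (8 / real CARD('T) * x) \<le> 1"
    using nonneg by (simp add: power_le_one_iff)
qed

lemma one_minus_inverse_sq_ge:
  fixes D :: real
  assumes "0 \<le> D" "D \<le> 1"
  shows "3 / 4 * D \<le> 1 - 1 / (1 + D)\<^sup>2"
proof -
  have "(1 + D)\<^sup>2 - 1 - 3 / 4 * D * (1 + D)\<^sup>2 = D * (5 / 4 - D / 2 - 3 / 4 * D\<^sup>2)"
    by (simp add: power2_eq_square algebra_simps)
  moreover have "D\<^sup>2 \<le> 1" using assms by (simp add: power_le_one)
  ultimately have "3 / 4 * D * (1 + D)\<^sup>2 \<le> (1 + D)\<^sup>2 - 1"
    using assms mult_nonneg_nonneg[of D "5 / 4 - D / 2 - 3 / 4 * D\<^sup>2"] by linarith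
  then show ?thesis
    using assms by (simp add: pos_le_divide_eq diff_divide_distrib[symmetric] field_simps)
qed

text \<open>The sample-size condition T \<ge> 8 C4^2 log(2q/\<epsilon>) enters here as D \<le> 1: it gives
  1 - 1/(1 + D)^2 \<ge> 3D/4, so the margin of the dual constraints dominates the deviation level x.\<close>

lemma dual_margin_bound:
  fixes T x C1 C2 C3 A D :: real
  assumes T: "T > 0" and x: "x > 0" and C2: "C2 > 0" and C1: "C1 \<ge> 0" and C3: "C3 > 0"
    and D: "D = (sqrt C2 + sqrt (2 * C1)) / C3 * sqrt (8 / T * x)" and D1: "D \<le> 1"
    and A: "A \<ge> T * C3"
  shows "A * (1 - 1 / (1 + D)\<^sup>2) > 0"
    and "x \<le> (A * (1 - 1 / (1 + D)\<^sup>2))\<^sup>2 / (4 * (T * (C2 + C1 / 2)))"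
proof -
  define c where "c = sqrt C2 + sqrt (2 * C1)"
  have c: "c > 0" using C2 C1 by (simp add: c_def add_pos_nonneg)
  have D0: "D > 0" using c C3 T x unfolding D c_def[symmetric] by simp
  have "A > 0" using A T C3 by (smt (verit) mult_pos_pos)
  have "T * C3 * (3 / 4 * D) \<le> A * (3 / 4 * D)" using A D0 by (intro mult_right_mono) auto
  also have "\<dots> \<le> A * (1 - 1 / (1 + D)\<^sup>2)"
    using one_minus_inverse_sq_ge[OF less_imp_le[OF D0] D1] \<open>A > 0\<close> by (intro mult_left_mono) auto
  finally have margin: "T * C3 * (3 / 4 * D) \<le> A * (1 - 1 / (1 + D)\<^sup>2)" .
  moreover have "T * C3 * (3 / 4 * D) > 0" using T C3 D0 by simp
  ultimately show "A * (1 - 1 / (1 + D)\<^sup>2) > 0" by linarith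
  have "(T * C3 * (3 / 4 * D))\<^sup>2 = 9 / 2 * T * x * c\<^sup>2"
    using C3 T x unfolding D c_def[symmetric]
    by (simp add: power_mult_distrib power_divide power2_eq_square)
  moreover have "c\<^sup>2 \<ge> C2 + 2 * C1"
    using C2 C1 unfolding c_def by (simp add: power2_eq_square algebra_simps real_sqrt_mult_self)
  moreover have "(T * C3 * (3 / 4 * D))\<^sup>2 \<le> (A * (1 - 1 / (1 + D)\<^sup>2))\<^sup>2"
    using margin T C3 D0 by (intro power_mono) auto
  moreover have "9 / 2 * T * x * (C2 + 2 * C1) \<le> 9 / 2 * T * x * c\<^sup>2"
    using \<open>c\<^sup>2 \<ge> C2 + 2 * C1\<close> T x by (intro mult_left_mono) auto
  ultimately have "9 / 2 * T * x * (C2 + 2 * C1) \<le> (A * (1 - 1 / (1 + D)\<^sup>2))\<^sup>2"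
    by linarith
  moreover have "x * (4 * (T * (C2 + C1 / 2))) \<le> 9 / 2 * T * x * (C2 + 2 * C1)"
    using T x C1 C2 by (simp add: algebra_simps)
  ultimately show "x \<le> (A * (1 - 1 / (1 + D)\<^sup>2))\<^sup>2 / (4 * (T * (C2 + C1 / 2)))"
    using T C1 C2 by (simp add: pos_le_divide_eq)
qed

lemma (in std_gaussian_vector) prob_rescaled_dual_constraint_fails:
  fixes X :: "real^'p::finite^'T" and R :: "real^'q::finite^'T" and x D :: real
  assumes R_nonneg: "\<forall>t l. R $ t $ l \<ge> 0" and pos: "\<forall>t. (R *v \<alpha>) $ t > 0"
    and C3: "C3 R \<alpha> > 0" and x: "x > 0"
    and D: "D = C4 X R \<phi> \<alpha> * sqrt (8 / real CARD('T) * x)" and D1: "D \<le> 1"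
  shows "prob {\<omega>\<in>space M. (1 + D)\<^sup>2 * (\<Sum>t\<in>UNIV. R $ t $ l / (R *v \<alpha>) $ t
              * ((\<xi> \<omega> $ t)\<^sup>2 + (X *v \<phi>) $ t * \<xi> \<omega> $ t))
            < (\<Sum>t\<in>UNIV. R $ t $ l / (R *v \<alpha>) $ t)}
       \<le> exp (- x)"
proof -
  define w where "w t = R $ t $ l / (R *v \<alpha>) $ t" for t
  define m where "m t = (X *v \<phi>) $ t" for t
  define u where "u = (\<Sum>t\<in>UNIV. w t) * (1 - 1 / (1 + D)\<^sup>2)"
  define V where "V = real CARD('T) * (C2 R \<alpha> + C1 X R \<phi> \<alpha> / 2)"
  have T: "real CARD('T) > 0" by simp
  from dual_margin_bound[OF T x C2_pos[OF C3] C1_nonneg[of X R \<phi> \<alpha>] C3 D[unfolded C4_def] D1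
      sum_dual_weights_ge[where l = l]]
  have margin: "u > 0" "x \<le> u\<^sup>2 / (4 * V)" unfolding u_def V_def w_def .
  have variance: "(\<Sum>t\<in>UNIV. (w t)\<^sup>2 * (1 + (m t)\<^sup>2 / 2)) \<le> V"
    unfolding w_def m_def V_def by (rule sum_dual_weights_sq_le)
  have "D \<ge> 0"
    using C3 C2_pos[OF C3] C1_nonneg[of X R \<phi> \<alpha>] x unfolding D C4_def by simp
  then have "(1 + D)\<^sup>2 > 0" by simp
  have "V > 0" using T C2_pos[OF C3] C1_nonneg[of X R \<phi> \<alpha>] by (simp add: V_def add_pos_nonneg)
  have "{\<omega>\<in>space M. (1 + D)\<^sup>2 * (\<Sum>t\<in>UNIV. w t * ((\<xi> \<omega> $ t)\<^sup>2 + m t * \<xi> \<omega> $ t)) < (\<Sum>t\<in>UNIV. w t)}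
      \<subseteq> {\<omega>\<in>space M. (\<Sum>t\<in>UNIV. w t * ((\<xi> \<omega> $ t)\<^sup>2 - 1 + m t * \<xi> \<omega> $ t)) \<le> - u}"
  proof safe
    fix \<omega>
    assume "(1 + D)\<^sup>2 * (\<Sum>t\<in>UNIV. w t * ((\<xi> \<omega> $ t)\<^sup>2 + m t * \<xi> \<omega> $ t)) < (\<Sum>t\<in>UNIV. w t)"
    then have "(\<Sum>t\<in>UNIV. w t * ((\<xi> \<omega> $ t)\<^sup>2 + m t * \<xi> \<omega> $ t)) < (\<Sum>t\<in>UNIV. w t) / (1 + D)\<^sup>2"
      using \<open>(1 + D)\<^sup>2 > 0\<close> by (simp add: pos_less_divide_eq mult.commute)
    then show "(\<Sum>t\<in>UNIV. w t * ((\<xi> \<omega> $ t)\<^sup>2 - 1 + m t * \<xi> \<omega> $ t)) \<le> - u"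
      by (simp add: u_def algebra_simps sum.distrib sum_subtractf)
  qed
  then have "prob {\<omega>\<in>space M. (1 + D)\<^sup>2 * (\<Sum>t\<in>UNIV. w t * ((\<xi> \<omega> $ t)\<^sup>2 + m t * \<xi> \<omega> $ t))
        < (\<Sum>t\<in>UNIV. w t)}
      \<le> prob {\<omega>\<in>space M. (\<Sum>t\<in>UNIV. w t * ((\<xi> \<omega> $ t)\<^sup>2 - 1 + m t * \<xi> \<omega> $ t)) \<le> - u}"
    by (intro finite_measure_mono) measurable
  also have "\<dots> \<le> exp (- x)"
    using R_nonneg pos margin variance \<open>V > 0\<close>
    by (intro prob_weighted_chi_square_le) (auto simp: w_def less_imp_le)
  finally show ?thesis by (simp add: w_def m_def)
qed

theorem theorem2:
  fixes X :: "real^'p::finite^'T::finite" and R :: "real^'q::finite^'T"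
    and G :: "'k::finite \<Rightarrow> 'p set"
    and \<phi>s :: "real^'p" and \<alpha>s :: "real^'q"
    and M :: "'a measure" and \<xi> :: "'a \<Rightarrow> real^'T" and Y :: "'a \<Rightarrow> real^'T"
    and \<epsilon> \<kappa> :: real and lam :: "'k \<Rightarrow> real"
  assumes R_nonneg: "\<forall>t l. R $ t $ l \<ge> 0"
    and partition: "\<forall>k. G k \<noteq> {}" "\<forall>k k'. k \<noteq> k' \<longrightarrow> G k \<inter> G k' = {}"
      "(\<Union>k. G k) = UNIV"
    and Ralpha_pos: "\<forall>t. (R *v \<alpha>s) $ t > 0"
    and prob: "prob_space M"
    and noise_indep: "prob_space.indep_vars M (\<lambda>_. borel) (\<lambda>t \<omega>. \<xi> \<omega> $ t) UNIV"
    and noise_normal: "\<forall>t. distributed M lborel (\<lambda>\<omega>. \<xi> \<omega> $ t) (\<lambda>x. ennreal (std_normal_density x))"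
    and model: "\<forall>\<omega>\<in>space M. dmul (Y \<omega>) (R *v \<alpha>s) = X *v \<phi>s + \<xi> \<omega>"
    and eps: "0 < \<epsilon>" "\<epsilon> < 1"
    and lam_def: "\<forall>k. lam k = 2 * sqrt (real (grank X (G k))
        + 2 * sqrt (real (grank X (G k)) * ln (real CARD('k) / \<epsilon>))
        + 2 * ln (real CARD('k) / \<epsilon>))"
    and kappa: "\<kappa> > 0"
    and gre: "GRE X G lam (card (Kstar G \<phi>s)) \<kappa>"
    and C3_pos: "C3 R \<alpha>s > 0"
    and T_large: "real CARD('T) \<ge> 8 * (C4 X R \<phi>s \<alpha>s)^2 * ln (2 * real CARD('q) / \<epsilon>)"
  shows "\<exists>A\<in>sets M. measure M A \<ge> 1 - 2 * \<epsilon> \<and>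
    (\<forall>\<omega>\<in>A. \<forall>\<phi>h \<alpha>h vh. schd_min X R G lam (Y \<omega>) \<phi>h \<alpha>h vh \<longrightarrow>
       norm (X *v (\<phi>h - \<phi>s)) \<le>
         C4 X R \<phi>s \<alpha>s * sqrt ((8 / real CARD('T)) * ln (2 * real CARD('q) / \<epsilon>))
             * (2 * norm (X *v \<phi>s) + norm (\<xi> \<omega>))
         + (8 / \<kappa>) * sqrt (2 * real (sstar X G \<phi>s) + 3 * real (card (Kstar G \<phi>s)) * ln (real CARD('k) / \<epsilon>))
         + norm (dmul (Y \<omega>) (R *v (\<alpha>h - \<alpha>s))))"
proof -
  interpret std_gaussian_vector M \<xi>
    using prob noise_indep noise_normal
    by (simp add: std_gaussian_vector_def std_gaussian_vector_axioms_def)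
  define x L where "x = ln (2 * real CARD('q) / \<epsilon>)" and "L = ln (real CARD('k) / \<epsilon>)"
  define D where "D = C4 X R \<phi>s \<alpha>s * sqrt ((8 / real CARD('T)) * x)"
  have "\<epsilon> < real CARD('k)" "\<epsilon> < 2 * real CARD('q)"
    using eps zero_less_card_finite[where 'a='k] zero_less_card_finite[where 'a='q] by linarith+
  then have x: "x > 0" and L: "L > 0"
    using eps by (simp_all add: x_def L_def ln_gt_zero_iff less_divide_eq)
  have D: "0 \<le> D" "D \<le> 1"
    using C4_scaled_bounds[OF C3_pos x] T_large by (simp_all add: D_def x_def)
  define Ea where "Ea k = {\<omega>\<in>space M.
      chi_square_threshold (grank X (G k)) L < (norm (Proj X (G k) (\<xi> \<omega>)))\<^sup>2}" for k
  define Eb where "Eb l = {\<omega>\<in>space M. (1 + D)\<^sup>2 * (\<Sum>t\<in>UNIV. R $ t $ l / (R *v \<alpha>s) $ t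
      * ((\<xi> \<omega> $ t)\<^sup>2 + (X *v \<phi>s) $ t * \<xi> \<omega> $ t)) < (\<Sum>t\<in>UNIV. R $ t $ l / (R *v \<alpha>s) $ t)}" for l
  have [measurable]: "closest_point (colspace X (G k)) \<in> borel_measurable borel" for k
    by (rule borel_measurable_closest_point_subspace[OF subspace_colspace])
  have Ea_events: "Ea k \<in> sets M" for k unfolding Ea_def Proj_def by measurable
  have Eb_events: "Eb l \<in> sets M" for l unfolding Eb_def by measurable
  have "prob (Ea k) \<le> exp (- L)" for k
    unfolding Ea_def Proj_def grank_def
    by (rule prob_norm_closest_point_sq_gt[OF subspace_colspace less_imp_le[OF L]])
  also have "exp (- L) = \<epsilon> / CARD('k)" using eps by (simp add: L_def exp_minus inverse_eq_divide)
  finally have prob_Ea: "prob (Ea k) \<le> \<epsilon> / CARD('k)" for k .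
  have "prob (Eb l) \<le> exp (- x)" for l
    unfolding Eb_def using R_nonneg Ralpha_pos C3_pos x D(2)
    by (intro prob_rescaled_dual_constraint_fails) (simp_all add: D_def)
  also have "exp (- x) \<le> \<epsilon> / CARD('q)" using eps by (simp add: x_def exp_minus frac_le)
  finally have prob_Eb: "prob (Eb l) \<le> \<epsilon> / CARD('q)" for l .
  define A where "A = space M - (\<Union>k. Ea k) - (\<Union>l. Eb l)"
  have "A \<in> sets M" "measure M A \<ge> 1 - 2 * \<epsilon>"
    using prob_avoid_finite_families[where E = Ea and F = Eb, OF Ea_events prob_Ea Eb_events prob_Eb]
    by (simp_all add: A_def)
  moreover have "norm (X *v (\<phi>h - \<phi>s)) \<le> D * (2 * norm (X *v \<phi>s) + norm (\<xi> \<omega>))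
      + (8 / \<kappa>) * sqrt (2 * real (sstar X G \<phi>s) + 3 * real (card (Kstar G \<phi>s)) * L)
      + norm (dmul (Y \<omega>) (R *v (\<alpha>h - \<alpha>s)))"
    if "\<omega> \<in> A" and "schd_min X R G lam (Y \<omega>) \<phi>h \<alpha>h vh" for \<omega> \<phi>h \<alpha>h vh
    using that model D L lam_def
    by (intro schd_error_bound_chi_square_threshold
        [OF partition(2,3) _ Ralpha_pos _ _ _ _ _ _ gre kappa])
      (auto simp: A_def Ea_def Eb_def not_less chi_square_threshold_def L_def)
  ultimately show ?thesis unfolding D_def x_def L_def by blast
qed

end
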